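(* Let $\theta$ be a non-constant inner function and let $\varphi=\varphi_1+\overline{\varphi_2}$, where $\varphi_1,\varphi_2\in K_\theta$. Then for every $u\in K_\theta\cap H^\infty$, \[ \|A^{\theta}_{\varphi}u\|^2-\|(A^{\theta}_{\varphi})^*u\|^2 =\|P^{\perp}(\bar{\theta}\varphi_1 u)\|^2-\|P(\overline{\varphi_1}u)\|^2-\Big(\|P^{\perp}(\bar{\theta}\varphi_2 u)\|^2-\|P(\overline{\varphi_2}u)\|^2\Big). \]
   Context: $\mathbb{D}$ is the open unit disk, $L^2$ the Lebesgue space of square-integrable functions on the unit circle $\mathbb{T}=\partial\mathbb{D}$ (normalized arc length), $H^2\subset L^2$ the Hardy space (functions with vanishing negative Fourier coefficients), $H^\infty$ the bounded analytic functions. $P$ and $P^\perp$ are the orthogonal projections of $L^2$ onto $H^2$ and onto $[H^2]^\perp=L^2\ominus H^2$. An inner function is an analytic $\theta$ with $|\theta|=1$ a.e. on $\mathbb{T}$. The model space is $K_\theta=H^2\ominus\theta H^2$, and $P_\theta f=Pf-\theta P(\bar\theta f)$ is the orthogonal projection of $L^2$ onto $K_\theta$. For $\varphi\in L^2$, the truncated Toeplitz operator is $A^\theta_\varphi f=P_\theta(\varphi f)$, defined on the dense subspace $K_\theta\cap H^\infty$ of $K_\theta$; its adjoint $(A^\theta_\varphi)^*$ acts on $K_\theta\cap H^\infty$ as $A^\theta_{\bar\varphi}$. All norms are $L^2$ norms. *)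

theory Defs
  imports "HOL-Analysis.Analysis"
begin

text \<open>Functions on the unit circle T are represented by their values at e^(i t),
  t in [0, 2 pi], i.e. as functions real => complex on [0, 2 pi];
  normalized arc length is (1/(2 pi)) times Lebesgue measure on [0, 2 pi].\<close>

definition circ :: "real set" where "circ = {0..2*pi}"

definition L2 :: "(real \<Rightarrow> complex) \<Rightarrow> bool" where
  "L2 f \<longleftrightarrow> f \<in> borel_measurable (lebesgue_on circ) \<and>
     integrable (lebesgue_on circ) (\<lambda>t. (cmod (f t))^2)"

definition l2inner :: "(real \<Rightarrow> complex) \<Rightarrow> (real \<Rightarrow> complex) \<Rightarrow> complex" where
  "l2inner f g = complex_of_real (1 / (2*pi)) *
     integral\<^sup>L (lebesgue_on circ) (\<lambda>t. f t * cnj (g t))"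

definition l2norm :: "(real \<Rightarrow> complex) \<Rightarrow> real" where
  "l2norm f = sqrt ((1 / (2*pi)) * integral\<^sup>L (lebesgue_on circ) (\<lambda>t. (cmod (f t))^2))"

definition fourier_coeff :: "(real \<Rightarrow> complex) \<Rightarrow> int \<Rightarrow> complex" where
  "fourier_coeff f n = complex_of_real (1 / (2*pi)) *
     integral\<^sup>L (lebesgue_on circ) (\<lambda>t. f t * exp (- \<i> * of_int n * complex_of_real t))"

definition H2 :: "(real \<Rightarrow> complex) \<Rightarrow> bool" where
  "H2 f \<longleftrightarrow> L2 f \<and> (\<forall>n::int. n < 0 \<longrightarrow> fourier_coeff f n = 0)"

definition Hinf :: "(real \<Rightarrow> complex) \<Rightarrow> bool" where
  "Hinf f \<longleftrightarrow> H2 f \<and> (\<exists>C. AE t in lebesgue_on circ. cmod (f t) \<le> C)"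

definition inner_fun :: "(real \<Rightarrow> complex) \<Rightarrow> bool" where
  "inner_fun \<theta> \<longleftrightarrow> Hinf \<theta> \<and> (AE t in lebesgue_on circ. cmod (\<theta> t) = 1)"

definition nonconstant :: "(real \<Rightarrow> complex) \<Rightarrow> bool" where
  "nonconstant f \<longleftrightarrow> \<not> (\<exists>c. AE t in lebesgue_on circ. f t = c)"

text \<open>Orthogonal projection P of L^2 onto H^2 (unique up to a.e. equality, which
  does not affect norms).\<close>
definition Pproj :: "(real \<Rightarrow> complex) \<Rightarrow> (real \<Rightarrow> complex)" where
  "Pproj f = (SOME h. H2 h \<and> (\<forall>g. H2 g \<longrightarrow> l2inner (\<lambda>t. f t - h t) g = 0))"

definition Pperp :: "(real \<Rightarrow> complex) \<Rightarrow> (real \<Rightarrow> complex)" where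
  "Pperp f = (\<lambda>t. f t - Pproj f t)"

definition Kspace :: "(real \<Rightarrow> complex) \<Rightarrow> (real \<Rightarrow> complex) \<Rightarrow> bool" where
  "Kspace \<theta> f \<longleftrightarrow> H2 f \<and> (\<forall>g. H2 g \<longrightarrow> l2inner f (\<lambda>t. \<theta> t * g t) = 0)"

definition Ptheta :: "(real \<Rightarrow> complex) \<Rightarrow> (real \<Rightarrow> complex) \<Rightarrow> (real \<Rightarrow> complex)" where
  "Ptheta \<theta> f = (\<lambda>t. Pproj f t - \<theta> t * Pproj (\<lambda>s. cnj (\<theta> s) * f s) t)"

definition TTO :: "(real \<Rightarrow> complex) \<Rightarrow> (real \<Rightarrow> complex) \<Rightarrow> (real \<Rightarrow> complex) \<Rightarrow> (real \<Rightarrow> complex)" where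
  "TTO \<theta> \<phi> u = Ptheta \<theta> (\<lambda>t. \<phi> t * u t)"

end

theory Submission
  imports Defs
begin

(* With a = phi1 u in H^2 and c = conj(phi2) u, the assumption phi2, u in K_theta makes c
   orthogonal to theta H^2.  For such a and c the compression splits as
   P_theta (a + c) = (a - theta P(conj(theta) a)) + P c, and since |theta| = 1 the first summand
   has the norm of P^perp(conj(theta) a); expanding the square gives
   |A_phi u|^2 = |P^perp(conj(theta) phi1 u)|^2 + |P(conj(phi2) u)|^2 + 2 Re <phi1 u, conj(phi2) u>.
   The adjoint has symbol phi2 + conj(phi1), and the cross term, the integral of phi1 phi2 |u|^2,
   is symmetric in phi1 and phi2, so it cancels in the difference.
   The L^2 theory behind P (its existence, and H^2 H^infinity contained in H^2) comes from
   Parseval's theorem on [0, 2 pi], proved via Riesz-Fischer and the density of trigonometric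
   polynomials (Stone-Weierstrass plus Lusin-type approximation of bounded functions). *)

section \<open>Square-integrable functions on the circle\<close>

abbreviation circ_measure :: "real measure" where
  "circ_measure \<equiv> lebesgue_on circ"

text \<open>Unnormalised versions of \<open>l2inner\<close> and \<open>l2norm\<close>, without the factor \<open>1/(2\<pi>)\<close>.\<close>

definition inprod :: "(real \<Rightarrow> complex) \<Rightarrow> (real \<Rightarrow> complex) \<Rightarrow> complex" where
  "inprod f g = (LINT t|circ_measure. f t * cnj (g t))"

definition sqnorm :: "(real \<Rightarrow> complex) \<Rightarrow> real" where
  "sqnorm f = (LINT t|circ_measure. (cmod (f t))^2)"

lemma borel_measurable_cnj [measurable]:
  "f \<in> borel_measurable M \<Longrightarrow> (\<lambda>x. cnj (f x)) \<in> borel_measurable M"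
  by (rule borel_measurable_continuous_on[where f=cnj]) (auto intro: continuous_intros)

lemma circ_sets [simp]: "circ \<in> sets lebesgue"
  unfolding circ_def by simp

lemma emeasure_circ_measure: "emeasure circ_measure circ = ennreal (2*pi)"
  unfolding circ_def by (simp add: emeasure_restrict_space)

lemma measure_circ_measure: "measure circ_measure circ = 2*pi"
  by (simp add: measure_def emeasure_circ_measure)

interpretation circ_measure: finite_measure circ_measure
  by (rule finite_measureI) (simp add: emeasure_circ_measure)

lemma AE_circ_measure_not_in_negligible:
  assumes "negligible N" shows "AE t in circ_measure. t \<notin> N"
proof -
  have "AE t in lebesgue. t \<notin> N"
    using assms by (intro AE_not_in) (simp add: negligible_iff_null_sets)
  thus ?thesis by (subst AE_restrict_space_iff) (auto elim: AE_mp)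
qed

lemma continuous_imp_measurable_circ:
  "continuous_on UNIV f \<Longrightarrow> f \<in> borel_measurable circ_measure"
  by (rule continuous_imp_measurable_on_sets_lebesgue) (auto intro: continuous_on_subset)

lemma L2_measurable: "L2 f \<Longrightarrow> f \<in> borel_measurable circ_measure"
  unfolding L2_def by simp

lemma L2_integrable_sq: "L2 f \<Longrightarrow> integrable circ_measure (\<lambda>t. (cmod (f t))^2)"
  unfolding L2_def by simp

lemma L2_integrable_norm:
  assumes "L2 f" shows "integrable circ_measure (\<lambda>t. cmod (f t))"
proof (rule circ_measure.square_integrable_imp_integrable)
  show "(\<lambda>t. cmod (f t)) \<in> borel_measurable circ_measure"
    using L2_measurable[OF assms] by measurable
qed (rule L2_integrable_sq[OF assms])

lemma L2_if_sq_le_integrable: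
  assumes [measurable]: "f \<in> borel_measurable circ_measure" and "integrable circ_measure g"
    and "AE t in circ_measure. (cmod (f t))^2 \<le> g t"
  shows "L2 f"
  unfolding L2_def
proof
  show "integrable circ_measure (\<lambda>t. (cmod (f t))^2)"
  proof (rule Bochner_Integration.integrable_bound[OF assms(2)])
    show "AE t in circ_measure. norm ((cmod (f t))^2) \<le> norm (g t)"
      using assms(3) by eventually_elim (auto simp: abs_if)
  qed simp
qed simp

lemma L2_AE_bounded:
  assumes "f \<in> borel_measurable circ_measure" and "AE t in circ_measure. cmod (f t) \<le> C"
  shows "L2 f"
proof (rule L2_if_sq_le_integrable[of _ "\<lambda>t. C^2"])
  show "AE t in circ_measure. (cmod (f t))^2 \<le> C^2"
    using assms(2) by eventually_elim (auto intro: power_mono)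
qed (use assms(1) in simp_all)

lemma L2_mult_AE_bounded:
  assumes "L2 f" and [measurable]: "b \<in> borel_measurable circ_measure"
    and "AE t in circ_measure. cmod (b t) \<le> C"
  shows "L2 (\<lambda>t. b t * f t)"
proof (rule L2_if_sq_le_integrable[of _ "\<lambda>t. C^2 * (cmod (f t))^2"])
  show "(\<lambda>t. b t * f t) \<in> borel_measurable circ_measure"
    using L2_measurable[OF assms(1)] by measurable
  show "integrable circ_measure (\<lambda>t. C^2 * (cmod (f t))^2)"
    using L2_integrable_sq[OF assms(1)] by simp
  show "AE t in circ_measure. (cmod (b t * f t))^2 \<le> C^2 * (cmod (f t))^2"
    using assms(3) by eventually_elim
      (simp add: norm_mult power_mult_distrib mult_right_mono power_mono)
qed

lemma L2_add:
  assumes "L2 f" "L2 g" shows "L2 (\<lambda>t. f t + g t)"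
proof (rule L2_if_sq_le_integrable[of _ "\<lambda>t. 2 * (cmod (f t))^2 + 2 * (cmod (g t))^2"])
  show "(\<lambda>t. f t + g t) \<in> borel_measurable circ_measure"
    using L2_measurable[OF assms(1)] L2_measurable[OF assms(2)] by measurable
  show "integrable circ_measure (\<lambda>t. 2 * (cmod (f t))^2 + 2 * (cmod (g t))^2)"
    using L2_integrable_sq[OF assms(1)] L2_integrable_sq[OF assms(2)] by simp
  have "(cmod (f t + g t))^2 \<le> 2 * (cmod (f t))^2 + 2 * (cmod (g t))^2" for t
  proof -
    have "(cmod (f t + g t))^2 \<le> (cmod (f t) + cmod (g t))^2"
      by (simp add: power_mono norm_triangle_ineq)
    also have "\<dots> \<le> 2 * (cmod (f t))^2 + 2 * (cmod (g t))^2"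
      using sum_squares_bound[of "cmod (f t)" "cmod (g t)"] by (simp add: power2_sum)
    finally show ?thesis .
  qed
  then show "AE t in circ_measure. (cmod (f t + g t))^2 \<le> 2 * (cmod (f t))^2 + 2 * (cmod (g t))^2"
    by simp
qed

lemma L2_cmult: "L2 f \<Longrightarrow> L2 (\<lambda>t. c * f t)"
  using L2_mult_AE_bounded[of f "\<lambda>t. c" "cmod c"] by simp

lemma L2_diff: "L2 f \<Longrightarrow> L2 g \<Longrightarrow> L2 (\<lambda>t. f t - g t)"
  using L2_add[of f "\<lambda>t. - 1 * g t"] L2_cmult[of g "- 1"] by simp

lemma L2_cnj: "L2 f \<Longrightarrow> L2 (\<lambda>t. cnj (f t))"
  unfolding L2_def by (auto intro: borel_measurable_cnj)

lemma L2_zero: "L2 (\<lambda>t. 0)"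
  by (rule L2_AE_bounded[of _ 0]) auto

lemma L2_sum: "finite A \<Longrightarrow> (\<And>i. i \<in> A \<Longrightarrow> L2 (f i)) \<Longrightarrow> L2 (\<lambda>t. \<Sum>i\<in>A. f i t)"
  by (induction A rule: finite_induct) (auto intro: L2_add L2_zero)

lemma integrable_inprod:
  assumes "L2 f" "L2 g"
  shows "integrable circ_measure (\<lambda>t. f t * cnj (g t))"
proof (rule Bochner_Integration.integrable_bound[where f="\<lambda>t. (cmod (f t))^2 + (cmod (g t))^2"])
  note [measurable] = L2_measurable[OF assms(1)] L2_measurable[OF assms(2)]
  show "integrable circ_measure (\<lambda>t. (cmod (f t))^2 + (cmod (g t))^2)"
    using L2_integrable_sq[OF assms(1)] L2_integrable_sq[OF assms(2)] by simp
  have "cmod (f t) * cmod (g t) \<le> (cmod (f t))^2 + (cmod (g t))^2" for t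
  proof -
    have "2 * (cmod (f t) * cmod (g t)) \<le> (cmod (f t))^2 + (cmod (g t))^2"
      using sum_squares_bound[of "cmod (f t)" "cmod (g t)"] by (simp add: mult.assoc)
    moreover have "0 \<le> cmod (f t) * cmod (g t)" by simp
    ultimately show ?thesis by linarith
  qed
  then show "AE t in circ_measure. norm (f t * cnj (g t)) \<le> norm ((cmod (f t))^2 + (cmod (g t))^2)"
    by (simp add: norm_mult)
  show "(\<lambda>t. f t * cnj (g t)) \<in> borel_measurable circ_measure" by measurable
qed

lemma integrable_mult_L2:
  "L2 f \<Longrightarrow> L2 g \<Longrightarrow> integrable circ_measure (\<lambda>t. f t * g t)"
  using integrable_inprod[of f "\<lambda>t. cnj (g t)"] by (simp add: L2_cnj)

lemma inprod_add_left: "L2 f \<Longrightarrow> L2 g \<Longrightarrow> L2 h \<Longrightarrow> inprod (\<lambda>t. f t + g t) h = inprod f h + inprod g h"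
  unfolding inprod_def by (simp add: distrib_right integrable_inprod)

lemma inprod_diff_left: "L2 f \<Longrightarrow> L2 g \<Longrightarrow> L2 h \<Longrightarrow> inprod (\<lambda>t. f t - g t) h = inprod f h - inprod g h"
  unfolding inprod_def by (simp add: left_diff_distrib integrable_inprod)

lemma inprod_cmult_left: "inprod (\<lambda>t. c * f t) h = c * inprod f h"
  unfolding inprod_def by (simp add: mult.assoc)

lemma inprod_commute: "inprod g f = cnj (inprod f g)"
  unfolding inprod_def by (simp flip: Bochner_Integration.integral_cnj add: mult.commute)

lemma inprod_add_right: "L2 f \<Longrightarrow> L2 g \<Longrightarrow> L2 h \<Longrightarrow> inprod h (\<lambda>t. f t + g t) = inprod h f + inprod h g"
  by (metis complex_cnj_add inprod_add_left inprod_commute)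

lemma inprod_diff_right: "L2 f \<Longrightarrow> L2 g \<Longrightarrow> L2 h \<Longrightarrow> inprod h (\<lambda>t. f t - g t) = inprod h f - inprod h g"
  by (metis complex_cnj_diff inprod_diff_left inprod_commute)

lemma inprod_cmult_right: "inprod h (\<lambda>t. c * f t) = cnj c * inprod h f"
  by (metis complex_cnj_cnj complex_cnj_mult inprod_cmult_left inprod_commute)

lemma inprod_sum_left:
  assumes "finite A" "\<And>i. i \<in> A \<Longrightarrow> L2 (g i)" "L2 h"
  shows "inprod (\<lambda>t. \<Sum>i\<in>A. g i t) h = (\<Sum>i\<in>A. inprod (g i) h)"
  using assms
proof (induction A rule: finite_induct)
  case (insert x F)
  then have "L2 (g x)" "L2 (\<lambda>t. \<Sum>i\<in>F. g i t)" by (auto intro: L2_sum)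
  with insert show ?case by (simp add: inprod_add_left)
qed (simp add: inprod_def)

lemma inprod_sum_right:
  assumes "finite A" "\<And>i. i \<in> A \<Longrightarrow> L2 (g i)" "L2 h"
  shows "inprod h (\<lambda>t. \<Sum>i\<in>A. g i t) = (\<Sum>i\<in>A. inprod h (g i))"
proof -
  have "inprod h (\<lambda>t. \<Sum>i\<in>A. g i t) = cnj (inprod (\<lambda>t. \<Sum>i\<in>A. g i t) h)"
    by (rule inprod_commute)
  also have "\<dots> = (\<Sum>i\<in>A. inprod h (g i))"
    using inprod_sum_left[OF assms] by (simp add: inprod_commute[of h])
  finally show ?thesis .
qed

lemma sqnorm_inprod: "complex_of_real (sqnorm f) = inprod f f"
proof -
  have "(\<lambda>t. f t * cnj (f t)) = (\<lambda>t. complex_of_real ((cmod (f t))^2))"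
    by (rule ext) (simp only: complex_norm_square)
  thus ?thesis unfolding inprod_def sqnorm_def by (simp only: integral_complex_of_real)
qed

lemma sqnorm_eq_Re_inprod: "sqnorm f = Re (inprod f f)"
  by (metis Re_complex_of_real sqnorm_inprod)

lemma sqnorm_nonneg: "0 \<le> sqnorm f"
  unfolding sqnorm_def by (rule integral_nonneg_AE) simp

lemma sqnorm_minus_commute: "sqnorm (\<lambda>t. f t - g t) = sqnorm (\<lambda>t. g t - f t)"
  unfolding sqnorm_def by (simp add: norm_minus_commute)

lemma sqnorm_cmult: "sqnorm (\<lambda>t. c * f t) = (cmod c)^2 * sqnorm f"
  unfolding sqnorm_def by (simp add: norm_mult power_mult_distrib)

lemma sqnorm_add: "L2 f \<Longrightarrow> L2 g \<Longrightarrow> sqnorm (\<lambda>t. f t + g t) = sqnorm f + sqnorm g + 2 * Re (inprod f g)"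
  by (simp add: sqnorm_eq_Re_inprod inprod_add_left inprod_add_right L2_add inprod_commute[of g f])

lemma sqnorm_diff: "L2 f \<Longrightarrow> L2 g \<Longrightarrow> sqnorm (\<lambda>t. f t - g t) = sqnorm f + sqnorm g - 2 * Re (inprod f g)"
  by (simp add: sqnorm_eq_Re_inprod inprod_diff_left inprod_diff_right L2_diff inprod_commute[of g f])

lemma sqnorm_cong_AE:
  assumes "f \<in> borel_measurable circ_measure" "g \<in> borel_measurable circ_measure"
    and "AE t in circ_measure. f t = g t"
  shows "sqnorm f = sqnorm g"
  unfolding sqnorm_def using assms by (intro integral_cong_AE) auto

lemma sqnorm_eq_0_imp_AE:
  assumes "L2 f" "sqnorm f = 0" shows "AE t in circ_measure. f t = 0"
proof -
  have "AE t in circ_measure. (cmod (f t))^2 = 0"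
    using assms integral_nonneg_eq_0_iff_AE[of circ_measure "\<lambda>t. (cmod (f t))^2"]
    unfolding sqnorm_def L2_def by simp
  thus ?thesis by simp
qed

lemma cauchy_schwarz_inprod:
  assumes "L2 f" "L2 g"
  shows "(cmod (inprod f g))^2 \<le> sqnorm f * sqnorm g"
proof (cases "sqnorm g = 0")
  case True
  have "AE t in circ_measure. f t * cnj (g t) = 0"
    using sqnorm_eq_0_imp_AE[OF assms(2) True] by eventually_elim simp
  then have "inprod f g = 0"
    unfolding inprod_def by (simp add: integral_eq_zero_AE)
  then show ?thesis using sqnorm_nonneg[of f] sqnorm_nonneg[of g] by simp
next
  case False
  then have g: "sqnorm g > 0" using sqnorm_nonneg[of g] by simp
  define z where "z = inprod f g"
  define c where "c = z / complex_of_real (sqnorm g)"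
  \<comment> \<open>project \<open>f\<close> onto the line through \<open>g\<close>\<close>
  have "0 \<le> sqnorm (\<lambda>t. f t - c * g t)" by (rule sqnorm_nonneg)
  also have "\<dots> = sqnorm f + (cmod c)^2 * sqnorm g - 2 * Re (cnj c * z)"
    using assms by (simp add: sqnorm_diff L2_cmult sqnorm_cmult inprod_cmult_right z_def)
  also have "cnj c * z = complex_of_real ((cmod z)^2 / sqnorm g)"
  proof -
    have "cnj c * z = (z * cnj z) / complex_of_real (sqnorm g)" by (simp add: c_def mult.commute)
    also have "\<dots> = complex_of_real ((cmod z)^2) / complex_of_real (sqnorm g)"
      by (simp only: complex_norm_square)
    finally show ?thesis by simp
  qed
  also have "(cmod c)^2 = (cmod z)^2 / (sqnorm g)^2"
    using g by (simp add: c_def norm_divide power_divide)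
  also have "sqnorm f + (cmod z)^2 / (sqnorm g)^2 * sqnorm g - 2 * Re (complex_of_real ((cmod z)^2 / sqnorm g))
      = sqnorm f - (cmod z)^2 / sqnorm g"
    using g by (simp add: power2_eq_square)
  finally show ?thesis using g by (simp add: z_def field_simps)
qed

lemma norm_inprod_le: "L2 f \<Longrightarrow> L2 g \<Longrightarrow> cmod (inprod f g) \<le> sqrt (sqnorm f) * sqrt (sqnorm g)"
  using real_sqrt_le_mono[OF cauchy_schwarz_inprod] by (simp add: real_sqrt_mult)

lemma tendsto_inprod_left:
  assumes "\<And>n. L2 (g n)" "L2 G" "L2 h"
    and lim: "(\<lambda>n. sqnorm (\<lambda>t. g n t - G t)) \<longlonglongrightarrow> 0"
  shows "(\<lambda>n. inprod (g n) h) \<longlonglongrightarrow> inprod G h"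
proof -
  have "(\<lambda>n. inprod (g n) h - inprod G h) \<longlonglongrightarrow> 0"
  proof (rule Lim_null_comparison)
    show "\<forall>\<^sub>F n in sequentially. norm (inprod (g n) h - inprod G h)
            \<le> sqrt (sqnorm (\<lambda>t. g n t - G t)) * sqrt (sqnorm h)"
      using assms norm_inprod_le[OF L2_diff] by (simp add: inprod_diff_left[symmetric])
    show "(\<lambda>n. sqrt (sqnorm (\<lambda>t. g n t - G t)) * sqrt (sqnorm h)) \<longlonglongrightarrow> 0"
      using tendsto_mult[OF tendsto_real_sqrt[OF lim] tendsto_const[of "sqrt (sqnorm h)"]] by simp
  qed
  thus ?thesis by (simp add: LIM_zero_iff)
qed

lemma tendsto_inprod_right:
  assumes "\<And>n. L2 (g n)" "L2 G" "L2 h"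
    and "(\<lambda>n. sqnorm (\<lambda>t. g n t - G t)) \<longlonglongrightarrow> 0"
  shows "(\<lambda>n. inprod h (g n)) \<longlonglongrightarrow> inprod h G"
  using tendsto_cnj[OF tendsto_inprod_left[OF assms]] by (simp add: inprod_commute[of h])

lemma inprod_eq_0_if_approx:
  assumes "\<And>n. L2 (g n)" "L2 G" "L2 h"
    and "(\<lambda>n. sqnorm (\<lambda>t. g n t - G t)) \<longlonglongrightarrow> 0" and "\<And>n. inprod h (g n) = 0"
  shows "inprod h G = 0"
  using tendsto_inprod_right[OF assms(1-4)] assms(5) by (simp add: LIMSEQ_const_iff)

lemma l2norm_sq: "(l2norm f)^2 = sqnorm f / (2*pi)"
  unfolding l2norm_def sqnorm_def by (simp add: integral_nonneg_AE)

lemma l2inner_eq_0_iff: "l2inner f g = 0 \<longleftrightarrow> inprod f g = 0"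
  unfolding l2inner_def inprod_def by simp

section \<open>Completeness of \<open>L\<^sup>2\<close>\<close>

lemma integral_norm_sq_le_sqnorm:
  assumes "L2 g"
  shows "(LINT t|circ_measure. cmod (g t))^2 \<le> 2*pi * sqnorm g"
proof -
  define h where "h t = complex_of_real (cmod (g t))" for t
  have "L2 h" using assms unfolding h_def L2_def by auto
  have "(LINT t|circ_measure. cmod (g t))^2 = (cmod (inprod h (\<lambda>t. 1)))^2"
    unfolding inprod_def h_def by simp
  also have "\<dots> \<le> sqnorm h * sqnorm (\<lambda>t. 1)"
    using \<open>L2 h\<close> by (intro cauchy_schwarz_inprod) (auto intro: L2_AE_bounded[of _ 1])
  also have "\<dots> = 2*pi * sqnorm g"
    unfolding sqnorm_def h_def by (simp add: measure_circ_measure)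
  finally show ?thesis .
qed

lemma nn_integral_norm_le_sqnorm:
  assumes "L2 g" "sqnorm g \<le> a^2" "0 \<le> a"
  shows "(\<integral>\<^sup>+t. cmod (g t) \<partial>circ_measure) \<le> ennreal (sqrt (2*pi) * a)"
proof -
  have "2*pi * sqnorm g \<le> 2*pi * a^2" using assms(2) by simp
  then have "(LINT t|circ_measure. cmod (g t))^2 \<le> 2*pi * a^2"
    using integral_norm_sq_le_sqnorm[OF assms(1)] by linarith
  also have "\<dots> = (sqrt (2*pi) * a)^2"
    by (simp add: power_mult_distrib)
  finally have "(LINT t|circ_measure. cmod (g t)) \<le> sqrt (2*pi) * a"
    by (rule power2_le_imp_le) (use assms(3) in simp)
  then have "ennreal (LINT t|circ_measure. cmod (g t)) \<le> ennreal (sqrt (2*pi) * a)"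
    by (rule ennreal_leI)
  moreover have "(\<integral>\<^sup>+t. cmod (g t) \<partial>circ_measure) = ennreal (LINT t|circ_measure. cmod (g t))"
    using L2_integrable_norm[OF assms(1)] by (intro nn_integral_eq_integral) auto
  ultimately show ?thesis by simp
qed

lemma AE_convergent_if_sqnorm_diff_le:
  assumes L: "\<And>j. L2 (h j)"
    and d: "\<And>j. sqnorm (\<lambda>t. h (Suc j) t - h j t) \<le> (1/4)^j"
  shows "AE t in circ_measure. convergent (\<lambda>j. h j t)"
proof -
  note [measurable] = L2_measurable[OF L]
  let ?d = "\<lambda>j t. h (Suc j) t - h j t"
  have "(\<integral>\<^sup>+t. (\<Sum>j. ennreal (cmod (?d j t))) \<partial>circ_measure)
      = (\<Sum>j. \<integral>\<^sup>+t. ennreal (cmod (?d j t)) \<partial>circ_measure)"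
    by (rule nn_integral_suminf) simp
  also have "\<dots> \<le> (\<Sum>j. ennreal (sqrt (2*pi) * (1/2)^j))"
  proof (intro suminf_le nn_integral_norm_le_sqnorm L2_diff L)
    show "sqnorm (\<lambda>t. h (Suc j) t - h j t) \<le> ((1/2)^j)^2" for j
    proof -
      have "(1/4::real)^j = ((1/2)^j)^2" by (induction j) (simp_all add: power2_eq_square)
      with d[of j] show ?thesis by simp
    qed
  qed auto
  also have "\<dots> = ennreal (\<Sum>j. sqrt (2*pi) * (1/2)^j)"
    by (intro suminf_ennreal2 summable_mult summable_geometric) auto
  finally have "(\<integral>\<^sup>+t. (\<Sum>j. ennreal (cmod (?d j t))) \<partial>circ_measure) \<le> ennreal (\<Sum>j. sqrt (2*pi) * (1/2)^j)" .
  from neq_top_trans[OF ennreal_neq_top this]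
  have "(\<integral>\<^sup>+t. (\<Sum>j. ennreal (cmod (?d j t))) \<partial>circ_measure) \<noteq> \<infinity>" by simp
  then have "AE t in circ_measure. (\<Sum>j. ennreal (cmod (?d j t))) \<noteq> \<infinity>"
    by (intro nn_integral_PInf_AE) simp
  then show ?thesis
  proof eventually_elim
    case (elim t)
    then have "summable (\<lambda>j. cmod (?d j t))"
      by (intro summable_suminf_not_top) auto
    then have "summable (\<lambda>j. ?d j t)"
      by (rule summable_norm_cancel)
    then have "(\<lambda>j. h 0 t + (\<Sum>i<j. ?d i t)) \<longlonglongrightarrow> h 0 t + (\<Sum>i. ?d i t)"
      by (intro tendsto_add tendsto_const summable_LIMSEQ)
    moreover have "(\<lambda>j. h j t) = (\<lambda>j. h 0 t + (\<Sum>i<j. ?d i t))"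
      using sum_lessThan_telescope[of "\<lambda>i. h i t"] by simp
    ultimately show ?case unfolding convergent_def by auto
  qed
qed

lemma L2_sqnorm_le_if_nn_integral_le:
  assumes [measurable]: "f \<in> borel_measurable circ_measure"
    and I: "(\<integral>\<^sup>+t. (cmod (f t))^2 \<partial>circ_measure) \<le> ennreal B" and "0 \<le> B"
  shows "L2 f" "sqnorm f \<le> B"
proof -
  from neq_top_trans[OF ennreal_neq_top I]
  have "(\<integral>\<^sup>+t. (cmod (f t))^2 \<partial>circ_measure) \<noteq> \<infinity>" by simp
  then have "(\<integral>\<^sup>+t. (cmod (f t))^2 \<partial>circ_measure) = ennreal (enn2real (\<integral>\<^sup>+t. (cmod (f t))^2 \<partial>circ_measure))"
    by (simp add: ennreal_enn2real_if)
  then have int: "integrable circ_measure (\<lambda>t. (cmod (f t))^2)"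
    by (intro integrableI_nn_integral_finite) auto
  then show "L2 f" unfolding L2_def by simp
  have "ennreal (sqnorm f) \<le> ennreal B"
    using I int unfolding sqnorm_def by (subst nn_integral_eq_integral[symmetric]) auto
  then show "sqnorm f \<le> B" using \<open>0 \<le> B\<close> by simp
qed

lemma sqnorm_le_if_AE_tendsto:
  assumes L: "\<And>k. L2 (f k)" and "L2 g" and [measurable]: "F \<in> borel_measurable circ_measure"
    and lim: "AE t in circ_measure. (\<lambda>k. f k t) \<longlonglongrightarrow> F t"
    and B: "\<forall>\<^sub>F k in sequentially. sqnorm (\<lambda>t. f k t - g t) \<le> B"
  shows "L2 (\<lambda>t. F t - g t)" "sqnorm (\<lambda>t. F t - g t) \<le> B"
proof -
  note [measurable] = L2_measurable[OF L] L2_measurable[OF \<open>L2 g\<close>]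
  let ?u = "\<lambda>k t. ennreal ((cmod (f k t - g t))^2)"
  have "(\<integral>\<^sup>+t. (cmod (F t - g t))^2 \<partial>circ_measure) = (\<integral>\<^sup>+t. liminf (\<lambda>k. ?u k t) \<partial>circ_measure)"
    using lim
  proof (intro nn_integral_cong_AE, eventually_elim)
    case (elim t)
    then have "(\<lambda>k. ?u k t) \<longlonglongrightarrow> ennreal ((cmod (F t - g t))^2)"
      by (intro tendsto_ennrealI tendsto_intros)
    from lim_imp_Liminf[OF trivial_limit_sequentially this] show ?case by (rule sym)
  qed
  also have "\<dots> \<le> liminf (\<lambda>k. \<integral>\<^sup>+t. ?u k t \<partial>circ_measure)"
    by (rule nn_integral_liminf) simp
  also have "\<dots> \<le> ennreal B"
  proof -
    have "\<forall>\<^sub>F k in sequentially. (\<integral>\<^sup>+t. ?u k t \<partial>circ_measure) \<le> ennreal B"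
      using B
    proof eventually_elim
      case (elim k)
      have "(\<integral>\<^sup>+t. ?u k t \<partial>circ_measure) = ennreal (sqnorm (\<lambda>t. f k t - g t))"
        unfolding sqnorm_def using L2_integrable_sq[OF L2_diff[OF L \<open>L2 g\<close>]]
        by (intro nn_integral_eq_integral) auto
      with elim show ?case by (simp add: ennreal_leI)
    qed
    then have "limsup (\<lambda>k. \<integral>\<^sup>+t. ?u k t \<partial>circ_measure) \<le> ennreal B"
      by (rule Limsup_bounded)
    then show ?thesis by (meson Liminf_le_Limsup order.trans trivial_limit_sequentially)
  qed
  finally have I: "(\<integral>\<^sup>+t. (cmod (F t - g t))^2 \<partial>circ_measure) \<le> ennreal B" .
  obtain k where "sqnorm (\<lambda>t. f k t - g t) \<le> B"
    using eventually_happens'[OF trivial_limit_sequentially B] by blast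
  then have "0 \<le> B" using sqnorm_nonneg order_trans by blast
  with I show "L2 (\<lambda>t. F t - g t)" "sqnorm (\<lambda>t. F t - g t) \<le> B"
    by (intro L2_sqnorm_le_if_nn_integral_le; simp)+
qed

lemma Cauchy_mono_modulus:
  fixes d :: "nat \<Rightarrow> nat \<Rightarrow> real"
  assumes "\<And>e. e > 0 \<Longrightarrow> \<exists>N. \<forall>m\<ge>N. \<forall>n\<ge>N. d m n < e"
  obtains r where "mono r" "\<And>j m n. m \<ge> r j \<Longrightarrow> n \<ge> r j \<Longrightarrow> d m n < (1/4)^j"
proof -
  have "\<forall>j. \<exists>N. \<forall>m\<ge>N. \<forall>n\<ge>N. d m n < (1/4::real)^j"
    using assms by simp
  then obtain N where N: "\<forall>j. \<forall>m\<ge>N j. \<forall>n\<ge>N j. d m n < (1/4::real)^j"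
    by (metis choice)
  define r where "r j = (\<Sum>i\<le>j. N i)" for j
  have "N j \<le> r j" for j
    unfolding r_def using member_le_sum[of j "{..j}" N] by auto
  then have "d m n < (1/4)^j" if "m \<ge> r j" "n \<ge> r j" for j m n
    using N that le_trans by blast
  moreover have "mono r"
    unfolding r_def mono_def by (intro allI impI sum_mono2) auto
  ultimately show ?thesis using that by blast
qed

theorem L2_complete:
  assumes L: "\<And>n. L2 (f n)"
    and Cauchy: "\<And>e. e > 0 \<Longrightarrow> \<exists>N. \<forall>m\<ge>N. \<forall>n\<ge>N. sqnorm (\<lambda>t. f m t - f n t) < e"
  shows "\<exists>F. L2 F \<and> (\<lambda>n. sqnorm (\<lambda>t. f n t - F t)) \<longlonglongrightarrow> 0"
proof -
  note [measurable] = L2_measurable[OF L]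
  obtain r where "mono r"
    and r: "\<And>j m n. m \<ge> r j \<Longrightarrow> n \<ge> r j \<Longrightarrow> sqnorm (\<lambda>t. f m t - f n t) < (1/4)^j"
    using Cauchy_mono_modulus[OF Cauchy] by blast
  have "AE t in circ_measure. convergent (\<lambda>j. f (r j) t)"
  proof (rule AE_convergent_if_sqnorm_diff_le[OF L])
    show "sqnorm (\<lambda>t. f (r (Suc j)) t - f (r j) t) \<le> (1/4)^j" for j
      using r[of j "r (Suc j)" "r j"] monoD[OF \<open>mono r\<close>, of j "Suc j"] by simp
  qed
  then have lim: "AE t in circ_measure. (\<lambda>j. f (r j) t) \<longlonglongrightarrow> lim (\<lambda>j. f (r j) t)"
    by eventually_elim (simp add: convergent_LIMSEQ_iff)
  define F where "F t = lim (\<lambda>j. f (r j) t)" for t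
  have [measurable]: "F \<in> borel_measurable circ_measure" unfolding F_def by measurable
  \<comment> \<open>Fatou along the subsequence bounds the distance of every late term to \<open>F\<close>\<close>
  have late: "L2 (\<lambda>t. F t - f n t) \<and> sqnorm (\<lambda>t. F t - f n t) \<le> (1/4)^j" if "n \<ge> r j" for n j
  proof -
    have "\<forall>\<^sub>F k in sequentially. sqnorm (\<lambda>t. f (r k) t - f n t) \<le> (1/4)^j"
      using eventually_ge_at_top[of j]
      by eventually_elim (use that monoD[OF \<open>mono r\<close>] r in \<open>simp add: less_imp_le\<close>)
    then show ?thesis
      using sqnorm_le_if_AE_tendsto[OF L L _ lim[folded F_def]] by auto
  qed
  have "L2 F" using L2_add[OF late[OF order.refl, of 0, THEN conjunct1] L[of "r 0"]] by simp
  moreover have "(\<lambda>n. sqnorm (\<lambda>t. f n t - F t)) \<longlonglongrightarrow> 0"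
  proof (rule LIMSEQ_I)
    fix e :: real assume "0 < e"
    then obtain j where j: "(1/4)^j < e"
      using real_arch_pow_inv[of e "1/4"] by auto
    have "norm (sqnorm (\<lambda>t. f n t - F t) - 0) < e" if "n \<ge> r j" for n
      using late[OF that] j sqnorm_nonneg sqnorm_minus_commute[of "f n" F] by simp
    then show "\<exists>n0. \<forall>n\<ge>n0. norm (sqnorm (\<lambda>t. f n t - F t) - 0) < e" by blast
  qed
  ultimately show ?thesis by blast
qed

section \<open>Exponentials and trigonometric sums\<close>

definition expi :: "int \<Rightarrow> real \<Rightarrow> complex" where
  "expi k t = exp (\<i> * of_int k * of_real t)"

lemma continuous_on_expi: "continuous_on S (expi k)"
  unfolding expi_def by (intro continuous_intros)

lemma expi_measurable [measurable]: "expi k \<in> borel_measurable circ_measure"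
  by (rule continuous_imp_measurable_circ continuous_on_expi)+

lemma norm_expi [simp]: "cmod (expi k t) = 1"
  unfolding expi_def by (simp add: norm_exp_eq_Re)

lemma expi_mult: "expi j t * expi k t = expi (j + k) t"
  unfolding expi_def by (simp add: exp_add[symmetric] algebra_simps)

lemma cnj_expi: "cnj (expi k t) = expi (-k) t"
  unfolding expi_def by (simp add: exp_cnj)

lemma L2_expi: "L2 (expi k)"
  by (rule L2_AE_bounded[of _ 1]) auto

lemma integral_expi: "(LINT t|circ_measure. expi k t) = (if k = 0 then of_real (2*pi) else 0)"
proof (cases "k = 0")
  case True
  thus ?thesis by (simp add: expi_def measure_circ_measure scaleR_conv_of_real)
next
  case False
  define F where "F t = expi k t / (\<i> * of_int k)" for t
  have "(F has_vector_derivative expi k t) (at t within {0..2*pi})" for t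
  proof -
    have "((\<lambda>z. exp (\<i> * of_int k * z) / (\<i> * of_int k)) has_field_derivative
            exp (\<i> * of_int k * of_real t)) (at (of_real t))"
      using False by (auto intro!: derivative_eq_intros)
    from has_vector_derivative_real_field[OF this] show ?thesis
      unfolding F_def expi_def by simp
  qed
  then have "(expi k has_integral F (2*pi) - F 0) {0..2*pi}"
    by (intro fundamental_theorem_of_calculus) auto
  moreover have "expi k (2*pi) = 1"
    unfolding expi_def using exp_2pi_1_int[of k] by (simp add: algebra_simps)
  moreover have "integrable circ_measure (expi k)"
    by (rule Bochner_Integration.integrable_bound[where f="\<lambda>t. 1::real"]) auto
  then have "(LINT t|circ_measure. expi k t) = integral circ (expi k)"
    by (rule lebesgue_integral_eq_integral[OF _ circ_sets])
  ultimately show ?thesis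
    using False by (simp add: F_def expi_def circ_def integral_unique)
qed

lemma inprod_expi: "inprod (expi j) (expi k) = (if j = k then of_real (2*pi) else 0)"
  unfolding inprod_def by (simp add: cnj_expi expi_mult integral_expi)

lemma fourier_coeff_inprod: "fourier_coeff f n = inprod f (expi n) / (2*pi)"
  unfolding fourier_coeff_def inprod_def by (simp add: expi_def exp_cnj)

definition trig_sum :: "int set \<Rightarrow> (int \<Rightarrow> complex) \<Rightarrow> real \<Rightarrow> complex" where
  "trig_sum A c t = (\<Sum>k\<in>A. c k * expi k t)"

lemma L2_trig_sum: "finite A \<Longrightarrow> L2 (trig_sum A c)"
  unfolding trig_sum_def by (intro L2_sum L2_cmult L2_expi)

lemma inprod_trig_sum_left:
  "finite A \<Longrightarrow> L2 f \<Longrightarrow> inprod (trig_sum A c) f = (\<Sum>k\<in>A. c k * inprod (expi k) f)"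
  unfolding trig_sum_def
  by (subst inprod_sum_left) (auto intro: L2_cmult L2_expi simp: inprod_cmult_left)

lemma inprod_trig_sum_right:
  "finite A \<Longrightarrow> L2 f \<Longrightarrow> inprod f (trig_sum A c) = (\<Sum>k\<in>A. cnj (c k) * inprod f (expi k))"
  unfolding trig_sum_def
  by (subst inprod_sum_right) (auto intro: L2_cmult L2_expi simp: inprod_cmult_right)

lemma inprod_trig_sum_expi:
  assumes "finite A"
  shows "inprod (trig_sum A c) (expi j) = (if j \<in> A then of_real (2*pi) * c j else 0)"
proof -
  have "inprod (trig_sum A c) (expi j) = (\<Sum>k\<in>A. c k * (if k = j then of_real (2*pi) else 0))"
    using assms by (simp add: inprod_trig_sum_left L2_expi inprod_expi)
  also have "\<dots> = (\<Sum>k\<in>A. if k = j then of_real (2*pi) * c j else 0)"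
    by (rule sum.cong) auto
  also have "\<dots> = (if j \<in> A then of_real (2*pi) * c j else 0)"
    using assms by (simp add: sum.delta)
  finally show ?thesis .
qed

lemma sqnorm_trig_sum: "finite A \<Longrightarrow> sqnorm (trig_sum A c) = 2*pi * (\<Sum>k\<in>A. (cmod (c k))^2)"
proof -
  assume A: "finite A"
  have "inprod (trig_sum A c) (trig_sum A c) = (\<Sum>k\<in>A. cnj (c k) * inprod (trig_sum A c) (expi k))"
    using A by (simp add: inprod_trig_sum_right L2_trig_sum)
  also have "\<dots> = (\<Sum>k\<in>A. of_real (2*pi) * (c k * cnj (c k)))"
    using A by (intro sum.cong) (simp_all add: inprod_trig_sum_expi)
  also have "\<dots> = (\<Sum>k\<in>A. of_real (2*pi * (cmod (c k))^2))"
    by (simp only: complex_norm_square[symmetric] of_real_mult)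
  finally have "inprod (trig_sum A c) (trig_sum A c) = of_real (2*pi * (\<Sum>k\<in>A. (cmod (c k))^2))"
    by (simp add: sum_distrib_left)
  then show ?thesis by (simp add: sqnorm_eq_Re_inprod)
qed

lemma trig_sum_diff:
  "finite B \<Longrightarrow> A \<subseteq> B \<Longrightarrow> (\<lambda>t. trig_sum B c t - trig_sum A c t) = trig_sum (B - A) c"
  unfolding trig_sum_def by (auto simp: sum.subset_diff[of A B])

lemma trig_sum_converges:
  assumes mono: "mono A" and fin: "\<And>N. finite (A N)"
    and bound: "\<And>N. (\<Sum>k\<in>A N. (cmod (c k))^2) \<le> B"
  shows "\<exists>F. L2 F \<and> (\<lambda>N. sqnorm (\<lambda>t. trig_sum (A N) c t - F t)) \<longlonglongrightarrow> 0"
proof (rule L2_complete)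
  show "L2 (trig_sum (A N) c)" for N using fin by (rule L2_trig_sum)
  define s where "s N = (\<Sum>k\<in>A N. (cmod (c k))^2)" for N
  have "incseq s"
    unfolding incseq_def s_def using fin monoD[OF mono] by (intro allI impI sum_mono2) auto
  moreover have "Bseq s"
    using bound by (intro BseqI'[of _ B]) (simp add: s_def sum_nonneg)
  ultimately have "Cauchy s" by (intro convergent_Cauchy Bseq_monoseq_convergent incseq_imp_monoseq)
  have dist: "sqnorm (\<lambda>t. trig_sum (A m) c t - trig_sum (A n) c t) = 2*pi * \<bar>s m - s n\<bar>" for m n
  proof -
    have *: "sqnorm (\<lambda>t. trig_sum (A m) c t - trig_sum (A n) c t) = 2*pi * (s m - s n)" if "n \<le> m" for m n
      using that fin monoD[OF mono that] \<open>incseq s\<close>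
      by (simp add: trig_sum_diff sqnorm_trig_sum s_def sum_diff)
    show ?thesis
      using *[of n m] *[of m n] \<open>incseq s\<close> sqnorm_minus_commute[of "trig_sum (A m) c"]
      by (cases "n \<le> m") (auto simp: incseq_def)
  qed
  fix e :: real assume "e > 0"
  then obtain N where "\<And>m n. m \<ge> N \<Longrightarrow> n \<ge> N \<Longrightarrow> dist (s m) (s n) < e / (2*pi)"
    using \<open>Cauchy s\<close> unfolding Cauchy_def by (meson divide_pos_pos pi_gt_zero zero_less_mult_iff zero_less_numeral)
  then show "\<exists>N. \<forall>m\<ge>N. \<forall>n\<ge>N. sqnorm (\<lambda>t. trig_sum (A m) c t - trig_sum (A n) c t) < e"
    by (auto simp: dist dist_real_def field_simps)
qed

definition partial_sum :: "(real \<Rightarrow> complex) \<Rightarrow> nat \<Rightarrow> real \<Rightarrow> complex" where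
  "partial_sum f N = trig_sum {- int N .. int N} (fourier_coeff f)"

lemma L2_partial_sum: "L2 (partial_sum f N)"
  unfolding partial_sum_def by (simp add: L2_trig_sum)

lemma inprod_partial_sum_expi:
  "inprod (partial_sum f N) (expi k) = (if k \<in> {- int N .. int N} then inprod f (expi k) else 0)"
  unfolding partial_sum_def by (simp add: inprod_trig_sum_expi fourier_coeff_inprod)

lemma bessel_inequality:
  assumes "L2 f"
  shows "(\<Sum>k\<in>{- int N..int N}. (cmod (fourier_coeff f k))^2) \<le> sqnorm f / (2*pi)"
proof -
  have "inprod (\<lambda>t. f t - partial_sum f N t) (partial_sum f N)
      = (\<Sum>k\<in>{- int N..int N}. cnj (fourier_coeff f k) * inprod (\<lambda>t. f t - partial_sum f N t) (expi k))"
    unfolding partial_sum_def[of f N] using assms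
    by (intro inprod_trig_sum_right L2_diff) (auto simp: L2_trig_sum)
  also have "\<dots> = 0"
    using assms by (intro sum.neutral) (auto simp: inprod_diff_left L2_partial_sum L2_expi inprod_partial_sum_expi)
  finally have "inprod (\<lambda>t. f t - partial_sum f N t) (partial_sum f N) = 0" .
  moreover have "sqnorm f = sqnorm (\<lambda>t. (f t - partial_sum f N t) + partial_sum f N t)"
    by simp
  ultimately have "sqnorm f = sqnorm (\<lambda>t. f t - partial_sum f N t) + sqnorm (partial_sum f N)"
    using sqnorm_add[OF L2_diff[OF assms L2_partial_sum[of f N]] L2_partial_sum[of f N]] by simp
  then have "sqnorm (partial_sum f N) \<le> sqnorm f"
    using sqnorm_nonneg[of "\<lambda>t. f t - partial_sum f N t"] by linarith
  then show ?thesis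
    by (simp add: partial_sum_def sqnorm_trig_sum field_simps)
qed

section \<open>Density of trigonometric polynomials\<close>

inductive trig_poly :: "(real \<Rightarrow> complex) \<Rightarrow> bool" where
  monomial: "trig_poly (\<lambda>t. c * expi k t)"
| add: "trig_poly p \<Longrightarrow> trig_poly q \<Longrightarrow> trig_poly (\<lambda>t. p t + q t)"

lemma trig_poly_const: "trig_poly (\<lambda>t. c)"
  using trig_poly.monomial[of c 0] by (simp add: expi_def)

lemma trig_poly_cmult: "trig_poly p \<Longrightarrow> trig_poly (\<lambda>t. c * p t)"
proof (induction rule: trig_poly.induct)
  case (monomial d k)
  then show ?case using trig_poly.monomial[of "c * d" k] by (simp add: mult.assoc)
qed (simp add: distrib_left trig_poly.add)

lemma trig_poly_mult: "trig_poly p \<Longrightarrow> trig_poly q \<Longrightarrow> trig_poly (\<lambda>t. p t * q t)"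
proof (induction arbitrary: q rule: trig_poly.induct)
  case (monomial c k)
  then show ?case
  proof (induction rule: trig_poly.induct)
    case (monomial d j)
    have "(\<lambda>t. c * expi k t * (d * expi j t)) = (\<lambda>t. (c * d) * expi (k + j) t)"
      by (auto simp: expi_mult[symmetric] algebra_simps)
    then show ?case by (simp add: trig_poly.monomial)
  qed (simp add: distrib_left trig_poly.add)
qed (simp add: distrib_right trig_poly.add)

lemma L2_trig_poly: "trig_poly p \<Longrightarrow> L2 p"
  by (induction rule: trig_poly.induct) (auto intro: L2_add L2_cmult L2_expi)

lemma trig_poly_cos: "trig_poly (\<lambda>t. complex_of_real (cos t))"
proof -
  have "complex_of_real (cos t) = (1/2) * expi 1 t + (1/2) * expi (-1) t" for t
  proof -
    have "complex_of_real (cos t) = (expi 1 t + expi (-1) t) / 2"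
      using cos_exp_eq[of "complex_of_real t"] unfolding expi_def by (simp add: cos_of_real)
    then show ?thesis by (simp add: field_simps)
  qed
  then have "(\<lambda>t. complex_of_real (cos t)) = (\<lambda>t. (1/2) * expi 1 t + (1/2) * expi (-1) t)"
    by (rule ext)
  then show ?thesis by (simp only:) (rule trig_poly.add trig_poly.monomial)+
qed

lemma trig_poly_sin: "trig_poly (\<lambda>t. complex_of_real (sin t))"
proof -
  have "complex_of_real (sin t) = (1/(2*\<i>)) * expi 1 t + (-1/(2*\<i>)) * expi (-1) t" for t
  proof -
    have "complex_of_real (sin t) = (expi 1 t - expi (-1) t) / (2 * \<i>)"
      using sin_exp_eq[of "complex_of_real t"] unfolding expi_def by (simp add: sin_of_real)
    then show ?thesis by (simp add: field_simps)
  qed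
  then have "(\<lambda>t. complex_of_real (sin t)) = (\<lambda>t. (1/(2*\<i>)) * expi 1 t + (-1/(2*\<i>)) * expi (-1) t)"
    by (rule ext)
  then show ?thesis by (simp only:) (rule trig_poly.add trig_poly.monomial)+
qed

lemma trig_poly_of_real_polynomial_function:
  assumes "real_polynomial_function g"
  shows "trig_poly (\<lambda>t. complex_of_real (g (exp (\<i> * complex_of_real t) :: complex)))"
  using assms
proof (induction rule: real_polynomial_function.induct)
  case (linear f)
  interpret bounded_linear f by fact
  have eq: "f z = Re z * f 1 + Im z * f \<i>" for z
  proof -
    have "f z = f (Re z *\<^sub>R 1 + Im z *\<^sub>R \<i>)"
      by (rule arg_cong[where f=f]) (simp add: complex_eq_iff)
    then show ?thesis by (simp add: add scale)
  qed
  have "complex_of_real (f (exp (\<i> * complex_of_real t)))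
      = of_real (f 1) * of_real (cos t) + of_real (f \<i>) * of_real (sin t)" for t
    unfolding eq[of "exp (\<i> * complex_of_real t)"] by (simp add: Re_exp Im_exp mult.commute)
  then have "(\<lambda>t. complex_of_real (f (exp (\<i> * complex_of_real t))))
      = (\<lambda>t. of_real (f 1) * of_real (cos t) + of_real (f \<i>) * of_real (sin t))"
    by (rule ext)
  moreover have "trig_poly \<dots>" by (intro trig_poly.add trig_poly_cmult trig_poly_cos trig_poly_sin)
  ultimately show ?case by simp
qed (simp_all add: trig_poly_const trig_poly.add trig_poly_mult)

lemma trig_poly_polynomial_function:
  fixes p :: "complex \<Rightarrow> complex"
  assumes "polynomial_function p"
  shows "trig_poly (\<lambda>t. p (exp (\<i> * complex_of_real t)))"
proof -
  have "real_polynomial_function (\<lambda>z. Re (p z))" "real_polynomial_function (\<lambda>z. Im (p z))"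
    using assms unfolding polynomial_function_def o_def
    by (auto intro: bounded_linear_Re bounded_linear_Im)
  then have "trig_poly (\<lambda>t. complex_of_real (Re (p (exp (\<i> * complex_of_real t))))
          + \<i> * complex_of_real (Im (p (exp (\<i> * complex_of_real t)))))"
    by (intro trig_poly.add trig_poly_cmult trig_poly_of_real_polynomial_function)
  moreover have "(\<lambda>t. complex_of_real (Re (p (exp (\<i> * complex_of_real t))))
          + \<i> * complex_of_real (Im (p (exp (\<i> * complex_of_real t))))) = (\<lambda>t. p (exp (\<i> * complex_of_real t)))"
    by (rule ext) (rule complex_eq[symmetric])
  ultimately show ?thesis by simp
qed

lemma integral_mult_trig_poly_eq_0:
  assumes "L2 f" and "\<And>k. inprod f (expi k) = 0" and "trig_poly p"
  shows "(LINT t|circ_measure. f t * p t) = 0"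
  using assms(3)
proof (induction rule: trig_poly.induct)
  case (monomial c k)
  have "(LINT t|circ_measure. f t * (c * expi k t)) = c * (LINT t|circ_measure. f t * cnj (expi (-k) t))"
    by (simp add: cnj_expi algebra_simps)
  then show ?case using assms(2)[of "-k"] unfolding inprod_def by simp
next
  case (add p q)
  have "(LINT t|circ_measure. f t * (p t + q t))
      = (LINT t|circ_measure. f t * p t) + (LINT t|circ_measure. f t * q t)"
    using integrable_mult_L2[OF assms(1) L2_trig_poly[OF add.hyps(1)]]
      integrable_mult_L2[OF assms(1) L2_trig_poly[OF add.hyps(2)]]
    by (simp add: distrib_left)
  then show ?case using add.IH by simp
qed

lemma cos_gt_cos_imp_near_endpoints:
  assumes "0 \<le> a" "a < 2*pi" "cos a > cos d" "0 < d" "d < pi"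
  shows "a < d \<or> a > 2*pi - d"
proof (rule ccontr)
  assume "\<not> (a < d \<or> a > 2*pi - d)"
  then have a: "d \<le> a" "a \<le> 2*pi - d" by auto
  show False
  proof (cases "a \<le> pi")
    case True
    then have "cos a \<le> cos d" using a assms by (intro cos_monotone_0_pi_le) auto
    then show False using assms by simp
  next
    case False
    then have "cos (2*pi - a) \<le> cos d" using a assms by (intro cos_monotone_0_pi_le) auto
    moreover have "cos (2*pi - a) = cos a" by (simp add: cos_diff)
    ultimately show False using assms by simp
  qed
qed

text \<open>Vanishing near both endpoints makes up for the jump of \<open>Arg2pi\<close> at \<open>1\<close>.\<close>

lemma continuous_on_sphere_comp_Arg2pi:
  fixes k :: "real \<Rightarrow> complex"
  assumes k: "continuous_on UNIV k" and d: "0 < d" "d < pi"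
    and k0: "\<And>t. t \<le> d \<Longrightarrow> k t = 0" and k1: "\<And>t. t \<ge> 2*pi - d \<Longrightarrow> k t = 0"
  shows "continuous_on (sphere 0 1) (\<lambda>z. k (Arg2pi z))"
proof -
  define A where "A = sphere (0::complex) 1 \<inter> {z. Re z > cos d}"
  define B where "B = sphere (0::complex) 1 - {1}"
  have "cos d < 1" using d cos_monotone_0_pi[of 0 d] by simp
  then have AB: "sphere 0 1 = A \<union> B" unfolding A_def B_def by auto
  have zero_on_A: "k (Arg2pi z) = 0" if "z \<in> A" for z
  proof -
    have "exp (\<i> * complex_of_real (Arg2pi z)) = z"
      using that complex_norm_eq_1_exp by (auto simp: A_def)
    then have "cos (Arg2pi z) = Re z"
      using Re_exp[of "\<i> * complex_of_real (Arg2pi z)"] by simp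
    then have "Arg2pi z < d \<or> Arg2pi z > 2*pi - d"
      using that Arg2pi[of z] d by (intro cos_gt_cos_imp_near_endpoints) (auto simp: A_def)
    then show ?thesis using k0 k1 by force
  qed
  have cA: "continuous_on A (\<lambda>z. k (Arg2pi z))"
    by (rule continuous_on_eq[where f="\<lambda>z. 0"]) (simp_all add: zero_on_A)
  have cB: "continuous_on B (\<lambda>z. k (Arg2pi z))"
  proof (intro continuous_at_imp_continuous_on ballI)
    fix z assume z: "z \<in> B"
    then have "z \<notin> \<real>\<^sub>\<ge>\<^sub>0" by (auto simp: B_def nonneg_Reals_def)
    then show "continuous (at z) (\<lambda>z. k (Arg2pi z))"
      using k by (intro continuous_at_compose[unfolded o_def, of z Arg2pi k] continuous_at_Arg2pi)
        (auto intro: continuous_on_interior[where S=UNIV])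
  qed
  have "openin (top_of_set (A \<union> B)) A" "openin (top_of_set (A \<union> B)) B"
  proof -
    have "A = (A \<union> B) \<inter> {z. Re z > cos d}" "B = (A \<union> B) \<inter> - {1}"
      unfolding A_def B_def by auto
    moreover have "open {z::complex. Re z > cos d}" by (intro open_Collect_less continuous_intros)
    ultimately show "openin (top_of_set (A \<union> B)) A" "openin (top_of_set (A \<union> B)) B"
      by (metis openin_open_Int, metis openin_open_Int open_Compl closed_singleton)
  qed
  from continuous_on_cases_local_open[OF this cA cB]
  show ?thesis using AB by simp
qed

lemma uniform_approx_trig_poly:
  fixes k :: "real \<Rightarrow> complex"
  assumes k: "continuous_on UNIV k" and d: "0 < d" "d < pi"
    and k0: "\<And>t. t \<le> d \<Longrightarrow> k t = 0" and k1: "\<And>t. t \<ge> 2*pi - d \<Longrightarrow> k t = 0"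
    and e: "e > 0"
  obtains q where "trig_poly q" "\<And>t. t \<in> circ \<Longrightarrow> cmod (k t - q t) < e"
proof -
  obtain p :: "complex \<Rightarrow> complex" where p: "polynomial_function p"
    "\<And>z. z \<in> sphere 0 1 \<Longrightarrow> norm (k (Arg2pi z) - p z) < e"
    using Stone_Weierstrass_polynomial_function[OF compact_sphere
        continuous_on_sphere_comp_Arg2pi[OF k d k0 k1] e] by blast
  have k_Arg2pi: "k (Arg2pi (exp (\<i> * complex_of_real t))) = k t" if "t \<in> circ" for t
  proof (cases "t < 2*pi")
    case True
    then show ?thesis
      using that Arg2pi_exp[of "\<i> * complex_of_real t"] by (simp add: circ_def)
  next
    case False
    then have "t = 2*pi" using that by (simp add: circ_def)
    moreover have "exp (\<i> * complex_of_real (2*pi)) = 1"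
      using exp_two_pi_i by (simp add: mult.commute)
    moreover have "Arg2pi 1 = 0" by (simp add: Arg2pi_eq_0)
    ultimately show ?thesis
      using k0[of 0] k1[of t] d by simp
  qed
  show ?thesis
  proof (rule that[OF trig_poly_polynomial_function[OF p(1)]])
    fix t assume "t \<in> circ"
    have "exp (\<i> * complex_of_real t) \<in> sphere 0 1" by (simp add: norm_exp_eq_Re)
    from p(2)[OF this] show "cmod (k t - p (exp (\<i> * complex_of_real t))) < e"
      by (simp add: k_Arg2pi[OF \<open>t \<in> circ\<close>])
  qed
qed

lemma continuous_bounded_on_circ:
  assumes "continuous_on UNIV (k::real \<Rightarrow> complex)"
  obtains C where "\<And>t. t \<in> circ \<Longrightarrow> cmod (k t) \<le> C"
proof -
  have "compact (k ` circ)" unfolding circ_def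
    by (intro compact_continuous_image continuous_on_subset[OF assms]) auto
  from compact_imp_bounded[OF this] obtain C where "\<forall>x\<in>k ` circ. norm x \<le> C"
    by (auto simp: bounded_iff)
  then show ?thesis using that by auto
qed

lemma norm_integral_mult_diff_le:
  assumes f: "L2 f" and "L2 k" "L2 q" and kq: "\<And>t. t \<in> circ \<Longrightarrow> cmod (k t - q t) \<le> e"
  shows "cmod ((LINT t|circ_measure. f t * k t) - (LINT t|circ_measure. f t * q t))
      \<le> e * (LINT t|circ_measure. cmod (f t))"
proof -
  have "(LINT t|circ_measure. f t * k t) - (LINT t|circ_measure. f t * q t)
      = (LINT t|circ_measure. f t * (k t - q t))"
    using integrable_mult_L2[OF f \<open>L2 k\<close>] integrable_mult_L2[OF f \<open>L2 q\<close>]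
    by (simp add: right_diff_distrib)
  also have "cmod \<dots> \<le> (LINT t|circ_measure. cmod (f t * (k t - q t)))"
    by (rule integral_norm_bound)
  also have "\<dots> \<le> (LINT t|circ_measure. e * cmod (f t))"
  proof (rule integral_mono_AE)
    show "integrable circ_measure (\<lambda>t. cmod (f t * (k t - q t)))"
      using integrable_mult_L2[OF f L2_diff[OF assms(2,3)]] by simp
    show "AE t in circ_measure. cmod (f t * (k t - q t)) \<le> e * cmod (f t)"
    proof (rule AE_I2)
      fix t assume "t \<in> space circ_measure"
      then have "cmod (f t) * cmod (k t - q t) \<le> cmod (f t) * e"
        using kq by (intro mult_left_mono) auto
      then show "cmod (f t * (k t - q t)) \<le> e * cmod (f t)" by (simp add: norm_mult mult.commute)
    qed
  qed (use L2_integrable_norm[OF f] in simp)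
  finally show ?thesis by simp
qed

lemma integral_mult_continuous_eq_0:
  assumes f: "L2 f" and z: "\<And>k. inprod f (expi k) = 0"
    and k: "continuous_on UNIV k" and d: "0 < d" "d < pi"
    and k0: "\<And>t. t \<le> d \<Longrightarrow> k t = 0" and k1: "\<And>t. t \<ge> 2*pi - d \<Longrightarrow> k t = 0"
  shows "(LINT t|circ_measure. f t * k t) = 0"
proof -
  obtain C where "\<And>t. t \<in> circ \<Longrightarrow> cmod (k t) \<le> C"
    using continuous_bounded_on_circ[OF k] by blast
  then have Lk: "L2 k"
    using k by (intro L2_AE_bounded[of _ C] continuous_imp_measurable_circ AE_I2) auto
  define I where "I = (LINT t|circ_measure. cmod (f t))"
  have "I \<ge> 0" unfolding I_def by (rule integral_nonneg_AE) simp
  have bound: "cmod (LINT t|circ_measure. f t * k t) \<le> e * I" if e: "e > 0" for e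
  proof -
    obtain q where q: "trig_poly q" "\<And>t. t \<in> circ \<Longrightarrow> cmod (k t - q t) < e"
      using uniform_approx_trig_poly[OF k d k0 k1 e] by blast
    then show ?thesis
      using norm_integral_mult_diff_le[OF f Lk L2_trig_poly[OF q(1)], of e]
        integral_mult_trig_poly_eq_0[OF f z q(1)]
      by (simp add: I_def less_imp_le)
  qed
  have "cmod (LINT t|circ_measure. f t * k t) \<le> 0 + e" if "e > 0" for e
  proof -
    have "cmod (LINT t|circ_measure. f t * k t) \<le> e / (I + 1) * I"
      using bound[of "e / (I + 1)"] that \<open>I \<ge> 0\<close> by simp
    also have "\<dots> \<le> e" using that \<open>I \<ge> 0\<close> by (simp add: field_simps)
    finally show ?thesis by simp
  qed
  then have "cmod (LINT t|circ_measure. f t * k t) \<le> 0" by (rule field_le_epsilon)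
  then show ?thesis by simp
qed

definition clip :: "real \<Rightarrow> complex \<Rightarrow> complex" where
  "clip C z = z / complex_of_real (max 1 (cmod z / C))"

lemma continuous_on_clip: "continuous_on UNIV (clip C)"
proof -
  have "complex_of_real (max 1 x) \<noteq> 0" for x by (simp add: max_def)
  then show ?thesis unfolding clip_def divide_inverse by (intro continuous_intros) auto
qed

lemma norm_clip_le:
  assumes "C > 0" shows "cmod (clip C z) \<le> C"
proof (cases "cmod z / C \<le> 1")
  case True
  then show ?thesis using assms by (simp add: clip_def norm_divide field_simps)
next
  case False
  then have "max 1 (cmod z / C) = cmod z / C" "cmod z > 0"
    using assms by (auto simp: field_simps)
  then show ?thesis using assms by (simp add: clip_def norm_divide norm_mult)
qed

lemma clip_eq: "C > 0 \<Longrightarrow> cmod z \<le> C \<Longrightarrow> clip C z = z"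
  unfolding clip_def by simp

text \<open>With \<open>\<delta> = \<pi>/(n+2)\<close>, \<open>cutoff n\<close> vanishes within \<open>\<delta>\<close> of the endpoints of \<open>[0, 2\<pi>]\<close> and
  equals \<open>1\<close> at distance at least \<open>2\<delta>\<close> from them.\<close>

definition cutoff :: "nat \<Rightarrow> real \<Rightarrow> real" where
  "cutoff n t = min 1 (max 0 ((t - pi/(real n+2)) / (pi/(real n+2)))) *
                min 1 (max 0 ((2*pi - pi/(real n+2) - t) / (pi/(real n+2))))"

lemma continuous_on_cutoff: "continuous_on UNIV (cutoff n)"
  unfolding cutoff_def by (intro continuous_intros) auto

lemma cutoff_bounds: "0 \<le> cutoff n t" "cutoff n t \<le> 1"
  unfolding cutoff_def by (auto intro: mult_le_one)

lemma cutoff_eq_0: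
  assumes "t \<le> pi/(real n+2) \<or> t \<ge> 2*pi - pi/(real n+2)"
  shows "cutoff n t = 0"
  using assms
proof
  assume "t \<le> pi/(real n+2)"
  then have "(t - pi/(real n+2)) / (pi/(real n+2)) \<le> 0" by (intro divide_nonpos_pos) auto
  then show ?thesis unfolding cutoff_def by (simp add: max_def)
next
  assume "t \<ge> 2*pi - pi/(real n+2)"
  then have "(2*pi - pi/(real n+2) - t) / (pi/(real n+2)) \<le> 0" by (intro divide_nonpos_pos) auto
  then show ?thesis unfolding cutoff_def by (simp add: max_def)
qed

lemma tendsto_cutoff:
  assumes "0 < t" "t < 2*pi"
  shows "(\<lambda>n. cutoff n t) \<longlonglongrightarrow> 1"
proof (rule tendsto_eventually)
  have "filterlim (\<lambda>n. 2 + real n) at_top sequentially"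
    by (rule filterlim_tendsto_add_at_top[OF tendsto_const filterlim_real_sequentially])
  then have "(\<lambda>n. pi / (real n + 2)) \<longlonglongrightarrow> 0"
    by (intro tendsto_divide_0[OF tendsto_const]) (simp add: add.commute filterlim_at_top_imp_at_infinity)
  then have "\<forall>\<^sub>F n in sequentially. pi / (real n + 2) < min t (2*pi - t) / 2"
    using assms by (intro order_tendstoD(2)) auto
  then show "\<forall>\<^sub>F n in sequentially. cutoff n t = 1"
  proof eventually_elim
    case (elim n)
    define a where "a = pi / (real n + 2)"
    have "a < min t (2*pi - t) / 2" unfolding a_def using elim .
    then have "2*a \<le> t" "2*a \<le> 2*pi - t"
      unfolding min_def by (auto split: if_splits)
    moreover have "0 < a" by (simp add: a_def)
    ultimately have "1 \<le> (t - a) / a" "1 \<le> (2*pi - a - t) / a" by (auto simp: field_simps)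
    then show ?case unfolding cutoff_def a_def[symmetric] by (auto simp: min_def max_def)
  qed
qed

lemma bounded_measurable_approx_continuous:
  assumes h: "h \<in> borel_measurable circ_measure" and C: "C > 0"
    and hb: "\<And>t. t \<in> circ \<Longrightarrow> cmod (h t) \<le> C"
  obtains k :: "nat \<Rightarrow> real \<Rightarrow> complex"
  where "\<And>n. continuous_on UNIV (k n)" "\<And>n t. cmod (k n t) \<le> C"
    and "\<And>n t. t \<le> pi/(real n+2) \<or> t \<ge> 2*pi - pi/(real n+2) \<Longrightarrow> k n t = 0"
    and "AE t in circ_measure. (\<lambda>n. k n t) \<longlonglongrightarrow> h t"
proof -
  have "h measurable_on circ"
    using h by (simp add: measurable_on_iff_borel_measurable)
  then obtain N g where N: "negligible N" and gc: "\<And>n. continuous_on UNIV (g n)"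
    and gl: "\<And>x. x \<notin> N \<Longrightarrow> (\<lambda>n. g n x) \<longlonglongrightarrow> (if x \<in> circ then h x else 0)"
    unfolding measurable_on_def by blast
  define k where "k n t = complex_of_real (cutoff n t) * clip C (g n t)" for n t
  have kc: "continuous_on UNIV (k n)" for n
    unfolding k_def by (intro continuous_intros continuous_on_compose2[OF continuous_on_clip gc]
        continuous_on_compose2[OF continuous_on_cutoff]) auto
  have kb: "cmod (k n t) \<le> C" for n t
  proof -
    have "cmod (k n t) = cutoff n t * cmod (clip C (g n t))"
      unfolding k_def using cutoff_bounds[of n t] by (simp add: norm_mult)
    also have "\<dots> \<le> 1 * C"
      using cutoff_bounds[of n t] norm_clip_le[OF C] by (intro mult_mono) auto
    finally show ?thesis by simp
  qed
  have k0: "k n t = 0" if "t \<le> pi/(real n+2) \<or> t \<ge> 2*pi - pi/(real n+2)" for n t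
    using cutoff_eq_0[OF that] by (simp add: k_def)
  have "negligible (N \<union> {0, 2*pi})" by (intro negligible_Un[OF N] negligible_finite) auto
  from AE_circ_measure_not_in_negligible[OF this]
  have "AE t in circ_measure. (\<lambda>n. k n t) \<longlonglongrightarrow> h t"
  proof (rule AE_mp, intro AE_I2 impI)
    fix t assume t: "t \<in> space circ_measure" "t \<notin> N \<union> {0, 2*pi}"
    then have tc: "t \<in> circ" "0 < t" "t < 2*pi" by (auto simp: circ_def)
    have "(\<lambda>n. clip C (g n t)) \<longlonglongrightarrow> clip C (h t)"
      using gl[of t] t tc by (intro continuous_on_tendsto_compose[OF continuous_on_clip]) auto
    then have "(\<lambda>n. clip C (g n t)) \<longlonglongrightarrow> h t" by (simp add: clip_eq[OF C hb[OF tc(1)]])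
    moreover have "(\<lambda>n. complex_of_real (cutoff n t)) \<longlonglongrightarrow> complex_of_real 1"
      by (intro tendsto_of_real tendsto_cutoff tc)
    ultimately show "(\<lambda>n. k n t) \<longlonglongrightarrow> h t"
      unfolding k_def using tendsto_mult by fastforce
  qed
  with kc kb k0 show ?thesis by (rule that)
qed

lemma integral_mult_bounded_eq_0:
  assumes f: "L2 f" and z: "\<And>k. inprod f (expi k) = 0"
    and h: "h \<in> borel_measurable circ_measure" and C: "C > 0" and hb: "\<And>t. t \<in> circ \<Longrightarrow> cmod (h t) \<le> C"
  shows "(LINT t|circ_measure. f t * h t) = 0"
proof -
  note [measurable] = L2_measurable[OF f] h
  obtain k where kc: "\<And>n. continuous_on UNIV (k n)" and kb: "\<And>n t. cmod (k n t) \<le> C"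
    and k0: "\<And>n t. t \<le> pi/(real n+2) \<or> t \<ge> 2*pi - pi/(real n+2) \<Longrightarrow> k n t = 0"
    and lim: "AE t in circ_measure. (\<lambda>n. k n t) \<longlonglongrightarrow> h t"
    using bounded_measurable_approx_continuous[OF h C hb] by blast
  have "(\<lambda>n. LINT t|circ_measure. f t * k n t) \<longlonglongrightarrow> (LINT t|circ_measure. f t * h t)"
  proof (rule integral_dominated_convergence[where w="\<lambda>t. C * cmod (f t)"])
    show "(\<lambda>t. f t * k n t) \<in> borel_measurable circ_measure" for n
      using continuous_imp_measurable_circ[OF kc] by simp
    show "AE t in circ_measure. norm (f t * k n t) \<le> C * cmod (f t)" for n
    proof (intro AE_I2)
      fix t
      have "cmod (f t) * cmod (k n t) \<le> cmod (f t) * C" by (rule mult_left_mono[OF kb]) simp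
      then show "norm (f t * k n t) \<le> C * cmod (f t)" by (simp add: norm_mult mult.commute)
    qed
    show "AE t in circ_measure. (\<lambda>n. f t * k n t) \<longlonglongrightarrow> f t * h t"
      using lim by eventually_elim (intro tendsto_mult tendsto_const)
  qed (use L2_integrable_norm[OF f] in simp_all)
  moreover have "(LINT t|circ_measure. f t * k n t) = 0" for n
  proof (rule integral_mult_continuous_eq_0[OF f z kc])
    show "0 < pi / (real n + 2)" "pi / (real n + 2) < pi"
      using divide_strict_left_mono[of 1 "real n + 2" pi] by simp_all
  qed (simp_all add: k0)
  ultimately show ?thesis by (simp add: LIMSEQ_const_iff)
qed

theorem AE_eq_0_if_fourier_coeffs_eq_0:
  assumes f: "L2 f" and z: "\<And>k. inprod f (expi k) = 0"
  shows "AE t in circ_measure. f t = 0"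
proof -
  note [measurable] = L2_measurable[OF f]
  have "AE t in circ_measure. cmod (f t) \<le> real M \<longrightarrow> f t = 0" for M :: nat
  proof -
    define g where "g t = (if cmod (f t) \<le> real M then (cmod (f t))^2 else 0)" for t
    \<comment> \<open>test \<open>f\<close> against its own truncated conjugate\<close>
    have "(LINT t|circ_measure. f t * (if cmod (f t) \<le> real M then cnj (f t) else 0)) = 0"
      by (rule integral_mult_bounded_eq_0[OF f z, of _ "real M + 1"]) auto
    moreover have "f t * (if cmod (f t) \<le> real M then cnj (f t) else 0) = complex_of_real (g t)" for t
      unfolding g_def by (simp flip: complex_norm_square)
    ultimately have "(LINT t|circ_measure. g t) = 0" by simp
    moreover have "integrable circ_measure g"
      unfolding g_def by (rule Bochner_Integration.integrable_bound[OF L2_integrable_sq[OF f]]) auto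
    moreover have "AE t in circ_measure. 0 \<le> g t" by (simp add: g_def)
    ultimately have "AE t in circ_measure. g t = 0"
      by (simp add: integral_nonneg_eq_0_iff_AE)
    then show ?thesis by eventually_elim (auto simp: g_def split: if_splits)
  qed
  then have "AE t in circ_measure. \<forall>M::nat. cmod (f t) \<le> real M \<longrightarrow> f t = 0"
    by (subst AE_all_countable) simp
  then show ?thesis
  proof eventually_elim
    case (elim t)
    obtain M :: nat where "cmod (f t) \<le> real M" using real_arch_simple by blast
    with elim show ?case by blast
  qed
qed

theorem tendsto_sqnorm_partial_sum:
  assumes f: "L2 f"
  shows "(\<lambda>N. sqnorm (\<lambda>t. f t - partial_sum f N t)) \<longlonglongrightarrow> 0"
proof -
  obtain F where F: "L2 F" and lim: "(\<lambda>N. sqnorm (\<lambda>t. partial_sum f N t - F t)) \<longlonglongrightarrow> 0"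
    using trig_sum_converges[of "\<lambda>N. {- int N..int N}" "fourier_coeff f" "sqnorm f / (2*pi)"]
      bessel_inequality[OF f] by (auto simp: mono_def partial_sum_def)
  have "inprod (\<lambda>t. f t - F t) (expi k) = 0" for k
  proof -
    have "(\<lambda>N. inprod (partial_sum f N) (expi k)) \<longlonglongrightarrow> inprod F (expi k)"
      by (rule tendsto_inprod_left[OF L2_partial_sum F L2_expi lim])
    moreover have "\<forall>\<^sub>F N in sequentially. inprod (partial_sum f N) (expi k) = inprod f (expi k)"
      using eventually_ge_at_top[of "nat \<bar>k\<bar>"] by eventually_elim (auto simp: inprod_partial_sum_expi)
    then have "(\<lambda>N. inprod (partial_sum f N) (expi k)) \<longlonglongrightarrow> inprod f (expi k)"
      by (rule tendsto_eventually)
    ultimately have "inprod F (expi k) = inprod f (expi k)" by (rule LIMSEQ_unique)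
    then show ?thesis using f F by (simp add: inprod_diff_left L2_expi)
  qed
  then have "AE t in circ_measure. f t - F t = 0"
    by (intro AE_eq_0_if_fourier_coeffs_eq_0 L2_diff f F)
  then have "sqnorm (\<lambda>t. f t - partial_sum f N t) = sqnorm (\<lambda>t. F t - partial_sum f N t)" for N
    using L2_measurable[OF f] L2_measurable[OF F] L2_measurable[OF L2_partial_sum[of f N]]
    by (intro sqnorm_cong_AE) (auto elim: AE_mp)
  then show ?thesis using lim by (simp add: sqnorm_minus_commute[of "partial_sum f _"])
qed

section \<open>The Hardy space\<close>

lemma H2_iff: "H2 f \<longleftrightarrow> L2 f \<and> (\<forall>n<0. inprod f (expi n) = 0)"
  unfolding H2_def fourier_coeff_inprod by simp

lemma H2_L2: "H2 f \<Longrightarrow> L2 f"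
  by (simp add: H2_iff)

lemma H2_add: "H2 f \<Longrightarrow> H2 g \<Longrightarrow> H2 (\<lambda>t. f t + g t)"
  unfolding H2_iff by (auto simp: L2_add inprod_add_left L2_expi)

lemma H2_diff: "H2 f \<Longrightarrow> H2 g \<Longrightarrow> H2 (\<lambda>t. f t - g t)"
  unfolding H2_iff by (auto simp: L2_diff inprod_diff_left L2_expi)

lemma Hinf_H2: "Hinf g \<Longrightarrow> H2 g"
  unfolding Hinf_def by simp

lemma Hinf_expi: "k \<ge> 0 \<Longrightarrow> Hinf (expi k)"
  unfolding Hinf_def H2_iff by (auto simp: L2_expi inprod_expi intro!: exI[of _ 1])

lemma Hinf_bounded:
  assumes "Hinf g"
  obtains C where "AE t in circ_measure. cmod (g t) \<le> C"
  using assms unfolding Hinf_def by blast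

lemma L2_mult_Hinf:
  assumes "L2 f" "Hinf g"
  shows "L2 (\<lambda>t. g t * f t)"
proof -
  obtain C where "AE t in circ_measure. cmod (g t) \<le> C" using Hinf_bounded[OF assms(2)] by blast
  moreover have "g \<in> borel_measurable circ_measure"
    using assms(2) by (simp add: L2_measurable H2_L2 Hinf_H2)
  ultimately show ?thesis using L2_mult_AE_bounded[OF assms(1)] by blast
qed

lemma inprod_H2_eq_0:
  assumes "L2 h" and orth: "\<And>k. k \<ge> 0 \<Longrightarrow> inprod h (expi k) = 0" and "H2 g"
  shows "inprod h g = 0"
proof (rule inprod_eq_0_if_approx[OF L2_partial_sum H2_L2[OF \<open>H2 g\<close>] \<open>L2 h\<close>])
  show "(\<lambda>N. sqnorm (\<lambda>t. partial_sum g N t - g t)) \<longlonglongrightarrow> 0"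
    using tendsto_sqnorm_partial_sum[OF H2_L2[OF \<open>H2 g\<close>]]
    by (simp add: sqnorm_minus_commute[of "partial_sum g _"])
  show "inprod h (partial_sum g N) = 0" for N
  proof -
    have "inprod h (partial_sum g N)
        = (\<Sum>k\<in>{- int N..int N}. cnj (fourier_coeff g k) * inprod h (expi k))"
      unfolding partial_sum_def using \<open>L2 h\<close> by (simp add: inprod_trig_sum_right)
    also have "\<dots> = 0"
    proof (intro sum.neutral ballI)
      fix k :: int
      show "cnj (fourier_coeff g k) * inprod h (expi k) = 0"
        using \<open>H2 g\<close> orth[of k] by (cases "k < 0") (auto simp: H2_def)
    qed
    finally show ?thesis .
  qed
qed

lemma H2_mult_Hinf:
  assumes f: "H2 f" and g: "Hinf g"
  shows "H2 (\<lambda>t. f t * g t)"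
  unfolding H2_iff
proof (intro conjI allI impI)
  show "L2 (\<lambda>t. f t * g t)" using L2_mult_Hinf[OF H2_L2[OF f] g] by (simp add: mult.commute)
  fix n :: int assume "n < 0"
  define h where "h t = cnj (g t) * expi n t" for t
  have "L2 (\<lambda>t. cnj (g t * expi (-n) t))" by (intro L2_cnj L2_mult_Hinf L2_expi g)
  then have "L2 h" unfolding h_def by (simp add: cnj_expi)
  \<comment> \<open>the coefficients of \<open>h\<close> are conjugates of coefficients of \<open>g\<close> with negative index\<close>
  have "inprod h (expi k) = cnj (inprod g (expi (n - k)))" for k
  proof -
    have "h t * cnj (expi k t) = cnj (g t * cnj (expi (n - k) t))" for t
      by (simp add: h_def cnj_expi mult.assoc expi_mult)
    then show ?thesis unfolding inprod_def by (simp flip: Bochner_Integration.integral_cnj)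
  qed
  then have "inprod h f = 0"
    using \<open>n < 0\<close> Hinf_H2[OF g] by (intro inprod_H2_eq_0[OF \<open>L2 h\<close> _ f]) (simp add: H2_iff)
  moreover have "inprod (\<lambda>t. f t * g t) (expi n) = cnj (inprod h f)"
    unfolding inprod_def h_def
    by (simp flip: Bochner_Integration.integral_cnj add: mult.commute mult.left_commute)
  ultimately show "inprod (\<lambda>t. f t * g t) (expi n) = 0" by simp
qed

subsection \<open>The Riesz projection\<close>

lemma projection_H2_exists:
  assumes f: "L2 f"
  shows "\<exists>h. H2 h \<and> (\<forall>g. H2 g \<longrightarrow> inprod (\<lambda>t. f t - h t) g = 0)"
proof -
  obtain h where h: "L2 h"
    and lim: "(\<lambda>N. sqnorm (\<lambda>t. trig_sum {0..int N} (fourier_coeff f) t - h t)) \<longlonglongrightarrow> 0"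
  proof (rule trig_sum_converges[of "\<lambda>N. {0..int N}" "fourier_coeff f" "sqnorm f / (2*pi)", THEN exE])
    show "(\<Sum>k\<in>{0..int N}. (cmod (fourier_coeff f k))^2) \<le> sqnorm f / (2*pi)" for N
      using bessel_inequality[OF f, of N] by (rule order_trans[rotated]) (intro sum_mono2, auto)
  qed (auto simp: mono_def)
  have coeff: "inprod h (expi k) = (if k \<ge> 0 then inprod f (expi k) else 0)" for k
  proof -
    have "(\<lambda>N. inprod (trig_sum {0..int N} (fourier_coeff f)) (expi k)) \<longlonglongrightarrow> inprod h (expi k)"
      by (rule tendsto_inprod_left[OF L2_trig_sum h L2_expi lim]) simp
    moreover have "\<forall>\<^sub>F N in sequentially. inprod (trig_sum {0..int N} (fourier_coeff f)) (expi k)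
        = (if k \<ge> 0 then inprod f (expi k) else 0)"
      using eventually_ge_at_top[of "nat k"]
      by eventually_elim (auto simp: inprod_trig_sum_expi fourier_coeff_inprod)
    then have "(\<lambda>N. inprod (trig_sum {0..int N} (fourier_coeff f)) (expi k))
        \<longlonglongrightarrow> (if k \<ge> 0 then inprod f (expi k) else 0)"
      by (rule tendsto_eventually)
    ultimately show ?thesis by (rule LIMSEQ_unique)
  qed
  have "H2 h" using h coeff by (simp add: H2_iff)
  moreover have "inprod (\<lambda>t. f t - h t) g = 0" if "H2 g" for g
    using coeff f h by (intro inprod_H2_eq_0[OF L2_diff[OF f h] _ that]) (simp add: inprod_diff_left L2_expi)
  ultimately show ?thesis by blast
qed

lemma Pproj:
  assumes "L2 f"
  shows "H2 (Pproj f)" "\<And>g. H2 g \<Longrightarrow> inprod (\<lambda>t. f t - Pproj f t) g = 0"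
proof -
  have "\<exists>h. H2 h \<and> (\<forall>g. H2 g \<longrightarrow> l2inner (\<lambda>t. f t - h t) g = 0)"
    using projection_H2_exists[OF assms] by (simp add: l2inner_eq_0_iff)
  then have "H2 (Pproj f) \<and> (\<forall>g. H2 g \<longrightarrow> l2inner (\<lambda>t. f t - Pproj f t) g = 0)"
    unfolding Pproj_def by (rule someI_ex)
  then show "H2 (Pproj f)" "\<And>g. H2 g \<Longrightarrow> inprod (\<lambda>t. f t - Pproj f t) g = 0"
    by (auto simp: l2inner_eq_0_iff)
qed

lemma L2_Pproj: "L2 f \<Longrightarrow> L2 (Pproj f)"
  using H2_L2 Pproj(1) by blast

lemma Pproj_eq_AE:
  assumes f: "L2 f" and h: "H2 h" and orth: "\<And>g. H2 g \<Longrightarrow> inprod (\<lambda>t. f t - h t) g = 0"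
  shows "AE t in circ_measure. Pproj f t = h t"
proof -
  define w where "w t = Pproj f t - h t" for t
  have w: "H2 w" unfolding w_def by (intro H2_diff Pproj f h)
  have "w = (\<lambda>t. (f t - h t) - (f t - Pproj f t))" by (auto simp: w_def)
  then have "inprod w w = inprod (\<lambda>t. (f t - h t) - (f t - Pproj f t)) w"
    by (subst (1) \<open>w = _\<close>) (rule refl)
  also have "\<dots> = inprod (\<lambda>t. f t - h t) w - inprod (\<lambda>t. f t - Pproj f t) w"
    using f H2_L2[OF h] H2_L2[OF w] L2_Pproj[OF f] by (intro inprod_diff_left L2_diff)
  finally have "sqnorm w = 0" using orth[OF w] Pproj(2)[OF f w] sqnorm_inprod[of w] by simp
  then have "AE t in circ_measure. w t = 0" by (rule sqnorm_eq_0_imp_AE[OF H2_L2[OF w]])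
  then show ?thesis by eventually_elim (simp add: w_def)
qed

section \<open>Model spaces and truncated Toeplitz operators\<close>

lemma inner_fun_Hinf: "inner_fun \<theta> \<Longrightarrow> Hinf \<theta>"
  by (simp add: inner_fun_def)

lemma inner_fun_measurable: "inner_fun \<theta> \<Longrightarrow> \<theta> \<in> borel_measurable circ_measure"
  by (simp add: inner_fun_def Hinf_def H2_L2 L2_measurable)

lemma inner_fun_AE_norm: "inner_fun \<theta> \<Longrightarrow> AE t in circ_measure. cmod (\<theta> t) = 1"
  by (simp add: inner_fun_def)

lemma L2_mult_inner_fun:
  assumes "inner_fun \<theta>" "L2 f"
  shows "L2 (\<lambda>t. \<theta> t * f t)" "L2 (\<lambda>t. cnj (\<theta> t) * f t)"
proof -
  have b: "AE t in circ_measure. cmod (\<theta> t) \<le> 1" "AE t in circ_measure. cmod (cnj (\<theta> t)) \<le> 1"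
    using inner_fun_AE_norm[OF assms(1)] by (auto elim: AE_mp)
  note meas = inner_fun_measurable[OF assms(1)]
  show "L2 (\<lambda>t. \<theta> t * f t)" by (rule L2_mult_AE_bounded[OF assms(2) meas b(1)])
  show "L2 (\<lambda>t. cnj (\<theta> t) * f t)"
    by (rule L2_mult_AE_bounded[OF assms(2) borel_measurable_cnj[OF meas] b(2)])
qed

lemma sqnorm_mult_inner_fun:
  assumes "inner_fun \<theta>" "L2 f"
  shows "sqnorm (\<lambda>t. \<theta> t * f t) = sqnorm f"
proof -
  note [measurable] = inner_fun_measurable[OF assms(1)] L2_measurable[OF assms(2)]
  have "AE t in circ_measure. (cmod (\<theta> t * f t))^2 = (cmod (f t))^2"
    using inner_fun_AE_norm[OF assms(1)] by eventually_elim (simp add: norm_mult)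
  then show ?thesis unfolding sqnorm_def by (intro integral_cong_AE) auto
qed

lemma L2_Ptheta: "inner_fun \<theta> \<Longrightarrow> L2 f \<Longrightarrow> L2 (Ptheta \<theta> f)"
  unfolding Ptheta_def by (intro L2_diff L2_Pproj L2_mult_inner_fun) (auto intro: L2_Pproj L2_mult_inner_fun)

lemma Kspace_H2: "Kspace \<theta> f \<Longrightarrow> H2 f"
  by (simp add: Kspace_def)

lemma Kspace_orth: "Kspace \<theta> f \<Longrightarrow> H2 g \<Longrightarrow> inprod f (\<lambda>t. \<theta> t * g t) = 0"
  unfolding Kspace_def by (simp add: l2inner_eq_0_iff)

lemma inprod_cnj_mult_Kspace_eq_0:
  assumes \<theta>: "inner_fun \<theta>" and \<phi>: "Kspace \<theta> \<phi>" and u: "Kspace \<theta> u" "Hinf u" and g: "H2 g"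
  shows "inprod (\<lambda>t. cnj (\<phi> t) * u t) (\<lambda>t. \<theta> t * g t) = 0"
proof -
  define h where "h t = cnj (\<theta> t) * (cnj (\<phi> t) * u t)" for t
  have "L2 h" unfolding h_def
    using L2_mult_Hinf[OF L2_cnj[OF H2_L2[OF Kspace_H2[OF \<phi>]]] u(2)]
    by (intro L2_mult_inner_fun(2)[OF \<theta>]) (simp add: mult.commute)
  have "inprod h (expi k) = inprod u (\<lambda>t. \<theta> t * (\<phi> t * expi k t))" for k
    unfolding inprod_def h_def by (simp add: mult.commute mult.left_commute)
  then have "inprod h g = 0"
    using Kspace_orth[OF u(1) H2_mult_Hinf[OF Kspace_H2[OF \<phi>] Hinf_expi]]
    by (intro inprod_H2_eq_0[OF \<open>L2 h\<close> _ g]) simp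
  then show ?thesis unfolding inprod_def h_def by (simp add: mult.commute mult.left_commute)
qed

lemma Pproj_add_H2_AE:
  assumes "H2 a" "L2 c"
  shows "AE t in circ_measure. Pproj (\<lambda>t. a t + c t) t = a t + Pproj c t"
proof (rule Pproj_eq_AE[OF L2_add[OF H2_L2[OF assms(1)] assms(2)] H2_add[OF assms(1) Pproj(1)[OF assms(2)]]])
  fix g assume "H2 g"
  have "(\<lambda>t. a t + c t - (a t + Pproj c t)) = (\<lambda>t. c t - Pproj c t)" by auto
  then show "inprod (\<lambda>t. a t + c t - (a t + Pproj c t)) g = 0"
    using Pproj(2)[OF assms(2) \<open>H2 g\<close>] by simp
qed

lemma Pproj_add_orth_AE:
  assumes "L2 b" "L2 c" and orth: "\<And>g. H2 g \<Longrightarrow> inprod c g = 0"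
  shows "AE t in circ_measure. Pproj (\<lambda>t. b t + c t) t = Pproj b t"
proof (rule Pproj_eq_AE[OF L2_add[OF assms(1,2)] Pproj(1)[OF assms(1)]])
  fix g assume "H2 g"
  have "(\<lambda>t. b t + c t - Pproj b t) = (\<lambda>t. (b t - Pproj b t) + c t)" by auto
  then show "inprod (\<lambda>t. b t + c t - Pproj b t) g = 0"
    using assms \<open>H2 g\<close> Pproj(2)[OF assms(1)]
    by (simp add: inprod_add_left L2_diff L2_Pproj H2_L2 orth)
qed

lemma sqnorm_diff_mult_inner_fun:
  assumes \<theta>: "inner_fun \<theta>" and "L2 a" "L2 w"
  shows "sqnorm (\<lambda>t. a t - \<theta> t * w t) = sqnorm (\<lambda>t. cnj (\<theta> t) * a t - w t)"
proof -
  have Lb: "L2 (\<lambda>t. cnj (\<theta> t) * a t - w t)" by (intro L2_diff L2_mult_inner_fun(2)[OF \<theta>] assms)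
  have "AE t in circ_measure. a t - \<theta> t * w t = \<theta> t * (cnj (\<theta> t) * a t - w t)"
    using inner_fun_AE_norm[OF \<theta>]
  proof eventually_elim
    case (elim t)
    then have "\<theta> t * cnj (\<theta> t) = 1" using complex_norm_square[of "\<theta> t"] by simp
    then show ?case by (simp add: right_diff_distrib mult.assoc[symmetric])
  qed
  then have "sqnorm (\<lambda>t. a t - \<theta> t * w t) = sqnorm (\<lambda>t. \<theta> t * (cnj (\<theta> t) * a t - w t))"
    using L2_diff[OF \<open>L2 a\<close> L2_mult_inner_fun(1)[OF \<theta> \<open>L2 w\<close>]] L2_mult_inner_fun(1)[OF \<theta> Lb]
    by (intro sqnorm_cong_AE L2_measurable) auto
  also have "\<dots> = sqnorm (\<lambda>t. cnj (\<theta> t) * a t - w t)"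
    by (rule sqnorm_mult_inner_fun[OF \<theta> Lb])
  finally show ?thesis .
qed

lemma Ptheta_add_AE:
  assumes \<theta>: "inner_fun \<theta>" and a: "H2 a" and c: "L2 c"
    and co: "\<And>g. H2 g \<Longrightarrow> inprod c (\<lambda>t. \<theta> t * g t) = 0"
  shows "AE t in circ_measure.
    Ptheta \<theta> (\<lambda>t. a t + c t) t = (a t - \<theta> t * Pproj (\<lambda>t. cnj (\<theta> t) * a t) t) + Pproj c t"
proof -
  have Lta: "L2 (\<lambda>t. cnj (\<theta> t) * a t)" by (rule L2_mult_inner_fun(2)[OF \<theta> H2_L2[OF a]])
  have "inprod (\<lambda>t. cnj (\<theta> t) * c t) g = inprod c (\<lambda>t. \<theta> t * g t)" for g
    unfolding inprod_def by (simp add: mult.commute mult.left_commute)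
  then have "AE t in circ_measure.
      Pproj (\<lambda>s. cnj (\<theta> s) * (a s + c s)) t = Pproj (\<lambda>t. cnj (\<theta> t) * a t) t"
    using Pproj_add_orth_AE[OF Lta L2_mult_inner_fun(2)[OF \<theta> c]] co by (simp add: distrib_left)
  with Pproj_add_H2_AE[OF a c] show ?thesis by eventually_elim (simp add: Ptheta_def)
qed

lemma sqnorm_Ptheta_add:
  assumes \<theta>: "inner_fun \<theta>" and a: "H2 a" and c: "L2 c"
    and co: "\<And>g. H2 g \<Longrightarrow> inprod c (\<lambda>t. \<theta> t * g t) = 0"
  shows "sqnorm (Ptheta \<theta> (\<lambda>t. a t + c t))
       = sqnorm (Pperp (\<lambda>t. cnj (\<theta> t) * a t)) + sqnorm (Pproj c) + 2 * Re (inprod a c)"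
proof -
  have La: "L2 a" using a by (rule H2_L2)
  define w where "w = Pproj (\<lambda>t. cnj (\<theta> t) * a t)"
  have Hw: "H2 w" unfolding w_def by (rule Pproj(1)[OF L2_mult_inner_fun(2)[OF \<theta> La]])
  have H\<theta>w: "H2 (\<lambda>t. \<theta> t * w t)"
    using H2_mult_Hinf[OF Hw inner_fun_Hinf[OF \<theta>]] by (simp add: mult.commute)
  define X where "X = (\<lambda>t. a t - \<theta> t * w t)"
  have LX: "L2 X" unfolding X_def by (intro L2_diff La H2_L2 H\<theta>w)
  have "sqnorm (Ptheta \<theta> (\<lambda>t. a t + c t)) = sqnorm (\<lambda>t. X t + Pproj c t)"
    using Ptheta_add_AE[OF \<theta> a c co] L2_Ptheta[OF \<theta> L2_add[OF La c]] LX L2_Pproj[OF c]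
    by (intro sqnorm_cong_AE L2_measurable L2_add) (auto simp: X_def w_def)
  also have "\<dots> = sqnorm X + sqnorm (Pproj c) + 2 * Re (inprod X (Pproj c))"
    by (rule sqnorm_add[OF LX L2_Pproj[OF c]])
  also have "inprod X (Pproj c) = inprod a c"
  proof -
    have "inprod (Pproj c) (\<lambda>t. \<theta> t * w t) = 0"
      using co[OF Hw] Pproj(2)[OF c H\<theta>w] c L2_Pproj[OF c] H2_L2[OF H\<theta>w]
      by (simp add: inprod_diff_left)
    then have "inprod (\<lambda>t. \<theta> t * w t) (Pproj c) = 0"
      by (subst inprod_commute) simp
    moreover have "inprod a (\<lambda>t. c t - Pproj c t) = 0"
      using Pproj(2)[OF c a] by (subst inprod_commute) simp
    ultimately show ?thesis
      unfolding X_def using La c L2_Pproj[OF c] H2_L2[OF H\<theta>w]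
      by (simp add: inprod_diff_left inprod_diff_right)
  qed
  also have "sqnorm X = sqnorm (Pperp (\<lambda>t. cnj (\<theta> t) * a t))"
    unfolding X_def Pperp_def w_def
    by (rule sqnorm_diff_mult_inner_fun[OF \<theta> La L2_Pproj[OF L2_mult_inner_fun(2)[OF \<theta> La]]])
  finally show ?thesis .
qed

lemma sqnorm_TTO:
  assumes \<theta>: "inner_fun \<theta>" and \<phi>1: "Kspace \<theta> \<phi>1" and \<phi>2: "Kspace \<theta> \<phi>2"
    and u: "Kspace \<theta> u" "Hinf u"
  shows "sqnorm (TTO \<theta> (\<lambda>t. \<phi>1 t + cnj (\<phi>2 t)) u)
       = sqnorm (Pperp (\<lambda>t. cnj (\<theta> t) * \<phi>1 t * u t)) + sqnorm (Pproj (\<lambda>t. cnj (\<phi>2 t) * u t))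
         + 2 * Re (inprod (\<lambda>t. \<phi>1 t * u t) (\<lambda>t. cnj (\<phi>2 t) * u t))"
proof -
  have "H2 (\<lambda>t. \<phi>1 t * u t)" by (rule H2_mult_Hinf[OF Kspace_H2[OF \<phi>1] u(2)])
  moreover have "L2 (\<lambda>t. cnj (\<phi>2 t) * u t)"
    using L2_mult_Hinf[OF L2_cnj[OF H2_L2[OF Kspace_H2[OF \<phi>2]]] u(2)] by (simp add: mult.commute)
  moreover note inprod_cnj_mult_Kspace_eq_0[OF \<theta> \<phi>2 u]
  ultimately have "sqnorm (Ptheta \<theta> (\<lambda>t. \<phi>1 t * u t + cnj (\<phi>2 t) * u t))
      = sqnorm (Pperp (\<lambda>t. cnj (\<theta> t) * (\<phi>1 t * u t))) + sqnorm (Pproj (\<lambda>t. cnj (\<phi>2 t) * u t))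
        + 2 * Re (inprod (\<lambda>t. \<phi>1 t * u t) (\<lambda>t. cnj (\<phi>2 t) * u t))"
    by (rule sqnorm_Ptheta_add[OF \<theta>])
  then show ?thesis by (simp add: TTO_def distrib_right mult.assoc)
qed

theorem lemma2p1:
  fixes \<theta> \<phi>1 \<phi>2 u :: "real \<Rightarrow> complex"
  assumes "inner_fun \<theta>" and "nonconstant \<theta>"
    and "Kspace \<theta> \<phi>1" and "Kspace \<theta> \<phi>2"
    and "Kspace \<theta> u" and "Hinf u"
  shows "(l2norm (TTO \<theta> (\<lambda>t. \<phi>1 t + cnj (\<phi>2 t)) u))^2
         - (l2norm (TTO \<theta> (\<lambda>t. cnj (\<phi>1 t + cnj (\<phi>2 t))) u))^2
       = (l2norm (Pperp (\<lambda>t. cnj (\<theta> t) * \<phi>1 t * u t)))^2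
         - (l2norm (Pproj (\<lambda>t. cnj (\<phi>1 t) * u t)))^2
         - ((l2norm (Pperp (\<lambda>t. cnj (\<theta> t) * \<phi>2 t * u t)))^2
            - (l2norm (Pproj (\<lambda>t. cnj (\<phi>2 t) * u t)))^2)"
proof -
  \<comment> \<open>the adjoint has symbol \<open>\<phi>2 + \<phi>1\<^sup>*\<close>, and the two cross terms agree\<close>
  have "(\<lambda>t. cnj (\<phi>1 t + cnj (\<phi>2 t))) = (\<lambda>t. \<phi>2 t + cnj (\<phi>1 t))" by (simp add: add.commute)
  moreover have "inprod (\<lambda>t. \<phi>2 t * u t) (\<lambda>t. cnj (\<phi>1 t) * u t)
      = inprod (\<lambda>t. \<phi>1 t * u t) (\<lambda>t. cnj (\<phi>2 t) * u t)"
    unfolding inprod_def by (simp add: mult.commute mult.left_commute)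
  ultimately show ?thesis
    using sqnorm_TTO[OF assms(1,3,4,5,6)] sqnorm_TTO[OF assms(1,4,3,5,6)]
    by (simp add: l2norm_sq diff_divide_distrib add_divide_distrib)
qed

end
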